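(* Suppose Assumptions (A1)–(A3) hold and let $\mathbf X^{(t)},\mathbf M^{(t)}$ be generated by the EDM algorithm with $\alpha>0$, $\beta\in[0,1)$. Then for every $t\ge0$, $$\mathbb E[f(\mathbf z^{(t+1)})]\le\mathbb E[f(\mathbf z^{(t)})]+\frac{\alpha^2L\beta}{2(1-\beta)}\mathbb E\|\bar{\mathbf m}^{(t-1)}\|^2+\frac{\alpha L^2}{2n}\mathbb E\|\mathbf X^{(t)}-\overline{\mathbf X}^{(t)}\|_{\mathrm F}^2+\frac{\alpha^2L\sigma^2}{2n}-\frac\alpha2\Big(1-\frac{\beta\alpha L}{1-\beta}-\alpha L\Big)\mathbb E\|\nabla\bar{\mathbf f}(\mathbf X^{(t)})\|^2-\frac\alpha2\mathbb E\|\nabla\bar{\mathbf f}(\overline{\mathbf X}^{(t)})\|^2.$$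
   Context: Setting. There are $n$ agents and parameters lie in $\mathbb R^d$. For each agent $i$ there is a data distribution $\mathcal D_i$ and a loss $F_i:\mathbb R^d\times\mathbb R^p\to\mathbb R$; $f_i(\mathbf x)=\mathbb E_{\bm\xi\sim\mathcal D_i}F_i(\mathbf x,\bm\xi)$, $f(\mathbf x)=\frac1n\sum_{i=1}^n f_i(\mathbf x)$, $f^\star=\inf_{\mathbf x}f(\mathbf x)$. For $\mathbf X\in\mathbb R^{n\times d}$ with rows $\mathbf x_1^\top,\dots,\mathbf x_n^\top$: $\nabla\mathbf f(\mathbf X)\in\mathbb R^{n\times d}$ has rows $\nabla f_i(\mathbf x_i)^\top$; for $\bm\Xi=(\bm\xi_1,\dots,\bm\xi_n)$, $\nabla\mathbf F(\mathbf X,\bm\Xi)$ has rows $\nabla F_i(\mathbf x_i,\bm\xi_i)^\top$ (gradients in $\mathbf x$); $\nabla\bar{\mathbf f}(\mathbf X)=\frac1n\sum_i\nabla f_i(\mathbf x_i)\in\mathbb R^d$; $\bar{\mathbf x}=\frac1n\mathbf X^\top\mathbf 1_n$, $\overline{\mathbf X}=\frac1n\mathbf 1_n\mathbf 1_n^\top\mathbf X$; $\mathbf P_{\mathbf I}=\mathbf I-\frac1n\mathbf 1_n\mathbf 1_n^\top$. $\|\cdot\|$ is the Euclidean norm, $\|\cdot\|_{\mathrm F}$ Frobenius, $\|\cdot\|_{\mathrm{op}}$ spectral. (A1) $\mathbf W=(w_{ij})\in\mathbb R^{n\times n}$ is symmetric, doubly stochastic ($\mathbf W\mathbf 1=\mathbf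 1$), has $w_{ii}>0$ for all $i$, nonnegative entries, smallest eigenvalue $>0$, and $\lambda:=\|\mathbf W-\frac1n\mathbf 1\mathbf 1^\top\|_{\mathrm{op}}<1$. (A2) Each $f_i$ is $L$-smooth ($\|\nabla f_i(\mathbf x)-\nabla f_i(\mathbf y)\|\le L\|\mathbf x-\mathbf y\|$) and bounded below. (A3) $\bm\Xi^{(t)}=(\bm\xi_1^{(t)},\dots,\bm\xi_n^{(t)})$ with $\bm\xi_i^{(t)}\sim\mathcal D_i$, all mutually independent over $i$ and $t\ge0$; $\mathcal F^{(t)}$ is the $\sigma$-algebra generated by $\bm\Xi^{(0)},\dots,\bm\Xi^{(t-1)}$; for every $\mathcal F^{(t)}$-measurable random $\mathbf x_i^{(t)}$: $\mathbb E[\nabla F_i(\mathbf x_i^{(t)},\bm\xi_i^{(t)})-\nabla f_i(\mathbf x_i^{(t)})\mid\mathcal F^{(t)}]=0$ and $\mathbb E[\|\nabla F_i(\mathbf x_i^{(t)},\bm\xi_i^{(t)})-\nabla f_i(\mathbf x_i^{(t)})\|^2\mid\mathcal F^{(t)}]\le\sigma^2$. EDM algorithm. Given $\alpha>0$, $\beta\in[0,1)$, $\mathbf x^{(0)}\in\mathbb R^d$: set $\mathbf X^{(-1)}=\mathbf X^{(0)}=\mathbf 1_n(\mathbf x^{(0)})^\top$, $\mathbf M^{(-1)}=\mathbf 0$; for $t\ge0$, $\mathbf M^{(t)}=\beta\mathbf M^{(t-1)}+(1-\beta)\nabla\mathbf F(\mathbf X^{(t)},\bm\Xi^{(t)})$;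 for $t\ge-1$, $\mathbf X^{(t+2)}=\mathbf W\big(2\mathbf X^{(t+1)}-\mathbf X^{(t)}-\alpha\mathbf M^{(t+1)}+\alpha\mathbf M^{(t)}\big)$. Write $\bar{\mathbf x}^{(t)}=\frac1n(\mathbf X^{(t)})^\top\mathbf 1_n$, $\bar{\mathbf m}^{(t)}=\frac1n(\mathbf M^{(t)})^\top\mathbf 1_n$ (so $\bar{\mathbf m}^{(-1)}=\mathbf 0$). Auxiliary sequence: $\mathbf z^{(0)}=\bar{\mathbf x}^{(0)}$ and $\mathbf z^{(t)}=\frac1{1-\beta}\bar{\mathbf x}^{(t)}-\frac{\beta}{1-\beta}\bar{\mathbf x}^{(t-1)}$ for $t\ge1$. *)

theory Defs
  imports "HOL-Probability.Probability"
begin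

text \<open>Agents are indexed by a finite type 'n (n = CARD('n)); parameters live in real^'d;
  a configuration matrix X in R^{n x d} is a function 'n => real^'d (row i = x_i).\<close>

definition avg :: "('n::finite \<Rightarrow> 'v::real_vector) \<Rightarrow> 'v" where
  "avg v = (1 / real CARD('n)) *\<^sub>R (\<Sum>i\<in>UNIV. v i)"

definition mix :: "real^'n^'n \<Rightarrow> ('n::finite \<Rightarrow> 'v::real_vector) \<Rightarrow> ('n \<Rightarrow> 'v)" where
  "mix W X = (\<lambda>i. \<Sum>j\<in>UNIV. (W $ i $ j) *\<^sub>R X j)"

definition mixing_matrix :: "real^'n^'n \<Rightarrow> bool" where
  "mixing_matrix W \<longleftrightarrow>
     transpose W = W
   \<and> W *v (\<chi> i. 1) = (\<chi> i. 1)
   \<and> (\<forall>i. W $ i $ i > 0)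
   \<and> (\<forall>i j. W $ i $ j \<ge> 0)
   \<and> (\<forall>\<mu> v. v \<noteq> 0 \<and> W *v v = \<mu> *\<^sub>R v \<longrightarrow> \<mu> > 0)
   \<and> onorm (\<lambda>v. (W - (\<chi> i j. 1 / real CARD('n))) *v v) < 1"

definition filt :: "'a measure \<Rightarrow> ('n \<Rightarrow> nat \<Rightarrow> 'a \<Rightarrow> 'b::topological_space) \<Rightarrow> nat \<Rightarrow> 'a measure" where
  "filt M \<xi> t = sigma (space M)
     {\<xi> i s -` B \<inter> space M | i s B. s < t \<and> B \<in> sets borel}"

text \<open>EDM iterates: X t = X^(t) for t >= 0 (X^(-1) = X^(0)),
  Mm t = M^(t) for t >= 0 (M^(-1) = 0); gF i x \<xi> is the x-gradient of F_i.\<close>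
definition edm_iterates ::
  "real^'n^'n \<Rightarrow> real \<Rightarrow> real \<Rightarrow> ('n::finite \<Rightarrow> 'v \<Rightarrow> 'p \<Rightarrow> 'v::real_vector)
   \<Rightarrow> ('n \<Rightarrow> nat \<Rightarrow> 'a \<Rightarrow> 'p) \<Rightarrow> 'v
   \<Rightarrow> (nat \<Rightarrow> 'a \<Rightarrow> 'n \<Rightarrow> 'v) \<Rightarrow> (nat \<Rightarrow> 'a \<Rightarrow> 'n \<Rightarrow> 'v) \<Rightarrow> bool" where
  "edm_iterates W \<alpha> \<beta> gF \<xi> x0 X Mm \<longleftrightarrow>
     (\<forall>\<omega>. X 0 \<omega> = (\<lambda>i. x0))
   \<and> (\<forall>\<omega>. Mm 0 \<omega> = (\<lambda>i. (1 - \<beta>) *\<^sub>R gF i (X 0 \<omega> i) (\<xi> i 0 \<omega>)))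
   \<and> (\<forall>t \<omega>. Mm (Suc t) \<omega> = (\<lambda>i. \<beta> *\<^sub>R Mm t \<omega> i
                              + (1 - \<beta>) *\<^sub>R gF i (X (Suc t) \<omega> i) (\<xi> i (Suc t) \<omega>)))
   \<and> (\<forall>\<omega>. X 1 \<omega> = mix W (\<lambda>j. 2 *\<^sub>R X 0 \<omega> j - X 0 \<omega> j - \<alpha> *\<^sub>R Mm 0 \<omega> j + \<alpha> *\<^sub>R 0))
   \<and> (\<forall>t \<omega>. X (Suc (Suc t)) \<omega> =
        mix W (\<lambda>j. 2 *\<^sub>R X (Suc t) \<omega> j - X t \<omega> j - \<alpha> *\<^sub>R Mm (Suc t) \<omega> j + \<alpha> *\<^sub>R Mm t \<omega> j))"

definition zseq :: "real \<Rightarrow> (nat \<Rightarrow> 'a \<Rightarrow> 'n::finite \<Rightarrow> 'v::real_vector) \<Rightarrow> nat \<Rightarrow> 'a \<Rightarrow> 'v" where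
  "zseq \<beta> X t \<omega> = (if t = 0 then avg (X 0 \<omega>)
     else (1 / (1 - \<beta>)) *\<^sub>R avg (X t \<omega>) - (\<beta> / (1 - \<beta>)) *\<^sub>R avg (X (t - 1) \<omega>))"

definition mbar_prev :: "(nat \<Rightarrow> 'a \<Rightarrow> 'n::finite \<Rightarrow> 'v::real_vector) \<Rightarrow> nat \<Rightarrow> 'a \<Rightarrow> 'v" where
  "mbar_prev Mm t \<omega> = (if t = 0 then 0 else avg (Mm (t - 1) \<omega>))"

end

theory Submission
  imports Defs
begin

(*
  Averaging the EDM recursion over the agents removes the doubly stochastic mixing matrix: the
  mean iterate moves by minus alpha times the mean momentum, and the auxiliary sequence then moves
  exactly like SGD, z(t+1) = z(t) - alpha (b(t) + e(t)), where b(t) is the mean of the true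
  local gradients at X(t) and e(t) the mean gradient noise; moreover
  z(t) = xbar(t) - alpha beta / (1 - beta) mbar(t-1).

  The descent lemma for the L-smooth average f at z(t), the Lipschitz continuity of grad f to
  move the gradient from z(t) to xbar(t) (paid for by AM-GM), and the polarisation identity for
  <grad f(xbar), b> give a pointwise bound in which the noise only enters through
  <grad f(z), e>, <b, e> and |e|^2.  In expectation the first two vanish and the last is at
  most sigma^2/n: X(t) and mbar(t-1) are measurable functions of the samples drawn before time
  t, and integrating out a single independent sample xi_i(t) (Fubini for the pair "all other
  samples", xi_i(t)) reduces everything to the unbiasedness and variance hypotheses at
  deterministic points.
*)

section \<open>Agent averages\<close>

lemma avg_add: "avg (\<lambda>i. u i + v i) = avg u + avg v"
  by (simp add: avg_def sum.distrib scaleR_add_right)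

lemma avg_diff: "avg (\<lambda>i. u i - v i) = avg u - avg v"
  by (simp add: avg_def sum_subtractf scaleR_diff_right)

lemma avg_scaleR: "avg (\<lambda>i. c *\<^sub>R u i) = c *\<^sub>R avg u"
  by (simp add: avg_def scaleR_sum_right)

lemma avg_const [simp]: "avg (\<lambda>i::'n::finite. c) = c"
  by (simp add: avg_def sum_constant_scaleR)

lemma avg_mono:
  fixes u v :: "'n::finite \<Rightarrow> real"
  shows "(\<And>i. u i \<le> v i) \<Longrightarrow> avg u \<le> avg v"
  by (simp add: avg_def divide_right_mono sum_mono)

lemma inner_avg_left: "inner (avg u) w = avg (\<lambda>i. inner (u i) w)"
  by (simp add: avg_def inner_sum_left)

lemma norm_avg_le: "norm (avg v) \<le> avg (\<lambda>i. norm (v i))"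
  by (simp add: avg_def divide_right_mono norm_sum)

lemma power2_norm_avg_le: "(norm (avg v))\<^sup>2 \<le> avg (\<lambda>i. (norm (v i))\<^sup>2)"
  for v :: "'n::finite \<Rightarrow> 'v::real_normed_vector"
proof -
  have "(norm (avg v))\<^sup>2 \<le> (avg (\<lambda>i. norm (v i)))\<^sup>2"
    using norm_avg_le[of v] by (intro power_mono) auto
  also have "\<dots> = (\<Sum>i\<in>UNIV. norm (v i))\<^sup>2 / (real CARD('n))\<^sup>2"
    by (simp add: avg_def power_divide)
  also have "\<dots> \<le> ((\<Sum>i\<in>UNIV. (norm (v i))\<^sup>2) * real CARD('n)) / (real CARD('n))\<^sup>2"
    by (intro divide_right_mono sum_squared_le_sum_of_squares) auto
  also have "\<dots> = avg (\<lambda>i. (norm (v i))\<^sup>2)"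
    by (simp add: avg_def power2_eq_square)
  finally show ?thesis .
qed

lemma power2_norm_avg_eq_double_sum:
  "(norm (avg u))\<^sup>2 = (1 / real CARD('n))\<^sup>2 * (\<Sum>i\<in>UNIV. \<Sum>j\<in>UNIV. inner (u i) (u j))"
  for u :: "'n::finite \<Rightarrow> 'v::real_inner"
proof -
  have "(norm (avg u))\<^sup>2 = (1 / real CARD('n))\<^sup>2 * inner (\<Sum>i\<in>UNIV. u i) (\<Sum>j\<in>UNIV. u j)"
    by (simp add: avg_def power_mult_distrib power_divide power2_norm_eq_inner)
  also have "inner (\<Sum>i\<in>UNIV. u i) (\<Sum>j\<in>UNIV. u j) = (\<Sum>i\<in>UNIV. \<Sum>j\<in>UNIV. inner (u i) (u j))"
    by (simp add: inner_sum_left inner_sum_right) (rule sum.swap)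
  finally show ?thesis .
qed

lemma mixing_matrix_column_sum:
  assumes "mixing_matrix W"
  shows "(\<Sum>i\<in>UNIV. W $ i $ j) = 1"
proof -
  have "transpose W = W" and row: "W *v (\<chi> i. 1) = (\<chi> i. 1)"
    using assms by (auto simp: mixing_matrix_def)
  then have "W $ i $ j = W $ j $ i" for i
    by (metis transpose_def vec_lambda_beta)
  then have "(\<Sum>i\<in>UNIV. W $ i $ j) = (W *v (\<chi> i. 1)) $ j"
    by (simp add: matrix_vector_mult_def)
  then show ?thesis using row by simp
qed

lemma avg_mix:
  assumes "mixing_matrix W"
  shows "avg (mix W v) = avg v"
proof -
  have "(\<Sum>i\<in>UNIV. mix W v i) = (\<Sum>j\<in>UNIV. (\<Sum>i\<in>UNIV. W $ i $ j) *\<^sub>R v j)"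
    unfolding mix_def by (subst sum.swap) (simp add: scaleR_sum_left)
  then show ?thesis
    using mixing_matrix_column_sum[OF assms] by (simp add: avg_def)
qed

section \<open>The descent lemma\<close>

lemma descent_lemma:
  fixes \<phi> :: "'v::real_inner \<Rightarrow> real"
  assumes grad: "\<And>x. GDERIV \<phi> x :> g x"
    and lip: "\<And>x y. norm (g x - g y) \<le> L * norm (x - y)"
  shows "\<phi> y \<le> \<phi> x + inner (g x) (y - x) + L / 2 * (norm (y - x))\<^sup>2"
proof -
  define u where "u = y - x"
  have d\<phi>: "((\<lambda>s. \<phi> (x + s *\<^sub>R u)) has_real_derivative inner u (g (x + s *\<^sub>R u))) (at s)" for s
  proof -
    have line: "((\<lambda>s. x + s *\<^sub>R u) has_derivative (\<lambda>h. h *\<^sub>R u)) (at s)"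
      by (auto intro!: derivative_eq_intros)
    have "(\<phi> has_derivative (\<lambda>h. inner h (g (x + s *\<^sub>R u)))) (at (x + s *\<^sub>R u))"
      using grad unfolding gderiv_def by blast
    from has_derivative_compose[OF line this] show ?thesis
      unfolding has_field_derivative_def by (rule has_derivative_eq_rhs) (auto simp: fun_eq_iff)
  qed
  define \<psi> where "\<psi> s = \<phi> (x + s *\<^sub>R u) - s * inner (g x) u - L / 2 * s\<^sup>2 * (norm u)\<^sup>2" for s
  have d\<psi>: "(\<psi> has_real_derivative
      (inner u (g (x + s *\<^sub>R u) - g x) - L * s * (norm u)\<^sup>2)) (at s)" for s
    unfolding \<psi>_def
    by (rule derivative_eq_intros d\<phi> refl)+ (simp add: inner_diff_right inner_commute)
  have slope_nonpos: "inner u (g (x + s *\<^sub>R u) - g x) - L * s * (norm u)\<^sup>2 \<le> 0" if "0 \<le> s" for s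
  proof -
    have "inner u (g (x + s *\<^sub>R u) - g x) \<le> norm u * norm (g (x + s *\<^sub>R u) - g x)"
      by (rule order_trans[OF _ Cauchy_Schwarz_ineq2]) simp
    also have "\<dots> \<le> norm u * (L * norm (s *\<^sub>R u))"
      using lip[of "x + s *\<^sub>R u" x] by (intro mult_left_mono) auto
    also have "\<dots> = L * s * (norm u)\<^sup>2" using that by (simp add: power2_eq_square)
    finally show ?thesis by simp
  qed
  have "\<psi> 1 \<le> \<psi> 0"
  proof (rule DERIV_nonpos_imp_nonincreasing[of 0 1])
    fix s :: real
    assume "0 \<le> s"
    with d\<psi>[of s] slope_nonpos[of s]
    show "\<exists>y. (\<psi> has_real_derivative y) (at s) \<and> y \<le> 0" by blast
  qed simp
  then show ?thesis unfolding \<psi>_def u_def by (simp add: inner_commute)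
qed

lemma Lipschitz_const_nonneg:
  fixes g :: "'v::euclidean_space \<Rightarrow> 'w::real_normed_vector"
  assumes "\<And>x y. norm (g x - g y) \<le> L * norm (x - y)"
  shows "0 \<le> L"
proof -
  obtain b :: 'v where "b \<in> Basis" using nonempty_Basis by blast
  then show ?thesis
    using order_trans[OF norm_ge_zero assms[of b 0]] by simp
qed

section \<open>The averaged EDM recursion\<close>

lemma edm_iteratesD:
  assumes "edm_iterates W \<alpha> \<beta> gF \<xi> x0 X Mm"
  shows "X 0 \<omega> = (\<lambda>i. x0)"
    and "Mm 0 \<omega> = (\<lambda>i. (1 - \<beta>) *\<^sub>R gF i (X 0 \<omega> i) (\<xi> i 0 \<omega>))"
    and "Mm (Suc t) \<omega> = (\<lambda>i. \<beta> *\<^sub>R Mm t \<omega> i + (1 - \<beta>) *\<^sub>R gF i (X (Suc t) \<omega> i) (\<xi> i (Suc t) \<omega>))"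
    and "X (Suc 0) \<omega> = mix W (\<lambda>j. 2 *\<^sub>R X 0 \<omega> j - X 0 \<omega> j - \<alpha> *\<^sub>R Mm 0 \<omega> j + \<alpha> *\<^sub>R 0)"
    and "X (Suc (Suc t)) \<omega> =
      mix W (\<lambda>j. 2 *\<^sub>R X (Suc t) \<omega> j - X t \<omega> j - \<alpha> *\<^sub>R Mm (Suc t) \<omega> j + \<alpha> *\<^sub>R Mm t \<omega> j)"
  using assms unfolding edm_iterates_def One_nat_def by simp_all

lemma edm_avg_X_Suc:
  assumes W: "mixing_matrix W" and iter: "edm_iterates W \<alpha> \<beta> gF \<xi> x0 X Mm"
  shows "avg (X (Suc t) \<omega>) = avg (X t \<omega>) - \<alpha> *\<^sub>R avg (Mm t \<omega>)"
proof (induction t)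
  case 0
  show ?case
    by (simp add: edm_iteratesD(1,4)[OF iter] avg_mix[OF W] avg_add avg_diff avg_scaleR
        scaleR_2 algebra_simps)
next
  case (Suc t)
  then show ?case
    by (simp add: edm_iteratesD(5)[OF iter] avg_mix[OF W] avg_add avg_diff avg_scaleR
        scaleR_2 algebra_simps)
qed

lemma edm_avg_Mm:
  assumes iter: "edm_iterates W \<alpha> \<beta> gF \<xi> x0 X Mm"
  shows "avg (Mm t \<omega>) = \<beta> *\<^sub>R mbar_prev Mm t \<omega> + (1 - \<beta>) *\<^sub>R avg (\<lambda>i. gF i (X t \<omega> i) (\<xi> i t \<omega>))"
  by (cases t) (simp_all add: edm_iteratesD(2,3)[OF iter] mbar_prev_def avg_add avg_scaleR)

lemma zseq_eq_avg_minus_mbar_prev: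
  fixes X Mm :: "nat \<Rightarrow> 'a \<Rightarrow> 'n::finite \<Rightarrow> 'v::real_vector"
  assumes W: "mixing_matrix W" and iter: "edm_iterates W \<alpha> \<beta> gF \<xi> x0 X Mm" and "\<beta> \<noteq> 1"
  shows "zseq \<beta> X t \<omega> = avg (X t \<omega>) - (\<alpha> * \<beta> / (1 - \<beta>)) *\<^sub>R mbar_prev Mm t \<omega>"
proof (cases t)
  case (Suc s)
  have "1 / (1 - \<beta>) - \<beta> / (1 - \<beta>) = 1"
    using \<open>\<beta> \<noteq> 1\<close> by (simp add: diff_divide_distrib[symmetric])
  then have "(1 / (1 - \<beta>)) *\<^sub>R x - (\<beta> / (1 - \<beta>)) *\<^sub>R x = x" for x :: 'v
    by (metis scaleR_left_diff_distrib scaleR_one)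
  moreover have "avg (X s \<omega>) = avg (X t \<omega>) + \<alpha> *\<^sub>R avg (Mm s \<omega>)"
    using edm_avg_X_Suc[OF W iter, of s \<omega>] Suc by simp
  ultimately show ?thesis
    using Suc by (simp add: zseq_def mbar_prev_def scaleR_add_right algebra_simps)
qed (simp add: zseq_def mbar_prev_def)

lemma zseq_Suc:
  assumes W: "mixing_matrix W" and iter: "edm_iterates W \<alpha> \<beta> gF \<xi> x0 X Mm" and "\<beta> \<noteq> 1"
  shows "zseq \<beta> X (Suc t) \<omega> = zseq \<beta> X t \<omega> - \<alpha> *\<^sub>R avg (\<lambda>i. gF i (X t \<omega> i) (\<xi> i t \<omega>))"
proof -
  define c where "c = \<alpha> * \<beta> / (1 - \<beta>)"
  define g where "g = avg (\<lambda>i. gF i (X t \<omega> i) (\<xi> i t \<omega>))"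
  have "(\<alpha> + c) * \<beta> = c" and "(\<alpha> + c) * (1 - \<beta>) = \<alpha>"
    using \<open>\<beta> \<noteq> 1\<close> by (simp_all add: c_def field_simps)
  then have "(\<alpha> + c) *\<^sub>R (\<beta> *\<^sub>R mbar_prev Mm t \<omega> + (1 - \<beta>) *\<^sub>R g) = c *\<^sub>R mbar_prev Mm t \<omega> + \<alpha> *\<^sub>R g"
    by (simp add: scaleR_add_right)
  then show ?thesis
    unfolding zseq_eq_avg_minus_mbar_prev[OF assms] edm_avg_X_Suc[OF W iter]
    by (simp add: mbar_prev_def edm_avg_Mm[OF iter] g_def c_def algebra_simps)
qed

section \<open>Smooth local objectives\<close>

locale smooth_agents =
  fixes f :: "'n::finite \<Rightarrow> 'v::euclidean_space \<Rightarrow> real"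
    and gf :: "'n \<Rightarrow> 'v \<Rightarrow> 'v"
    and L :: real
  assumes grad_f: "\<And>i x. GDERIV (f i) x :> gf i x"
    and smooth: "\<And>i x y. norm (gf i x - gf i y) \<le> L * norm (x - y)"
begin

abbreviation fbar :: "'v \<Rightarrow> real" where
  "fbar x \<equiv> avg (\<lambda>i. f i x)"

abbreviation grad_fbar :: "'v \<Rightarrow> 'v" where
  "grad_fbar x \<equiv> avg (\<lambda>i. gf i x)"

lemma L_nonneg: "0 \<le> L"
  by (rule Lipschitz_const_nonneg[OF smooth])

lemma grad_fbar_Lipschitz: "norm (grad_fbar x - grad_fbar y) \<le> L * norm (x - y)"
proof -
  have "norm (grad_fbar x - grad_fbar y) \<le> avg (\<lambda>i. norm (gf i x - gf i y))"
    using norm_avg_le by (metis avg_diff)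
  also have "\<dots> \<le> L * norm (x - y)"
    using avg_mono[of "\<lambda>i. norm (gf i x - gf i y)" "\<lambda>_. L * norm (x - y)"] smooth by simp
  finally show ?thesis .
qed

lemma fbar_descent: "fbar y \<le> fbar x + inner (grad_fbar x) (y - x) + L / 2 * (norm (y - x))\<^sup>2"
proof -
  have "fbar y \<le> avg (\<lambda>i. f i x + inner (gf i x) (y - x) + L / 2 * (norm (y - x))\<^sup>2)"
    by (intro avg_mono descent_lemma[OF grad_f smooth])
  then show ?thesis
    by (simp add: avg_add inner_avg_left)
qed

lemma gf_borel_measurable [measurable]: "gf i \<in> borel_measurable borel"
proof -
  have "continuous_on UNIV (gf i)"
    by (rule lipschitz_on_continuous_on[of L], rule lipschitz_onI)
      (use smooth L_nonneg in \<open>auto simp: dist_norm\<close>)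
  then show ?thesis by (rule borel_measurable_continuous_onI)
qed

lemma grad_fbar_borel_measurable [measurable]: "grad_fbar \<in> borel_measurable borel"
  unfolding avg_def by measurable

lemma f_borel_measurable [measurable]: "f i \<in> borel_measurable borel"
proof -
  have "continuous_on UNIV (f i)"
    using grad_f unfolding gderiv_def
    by (intro continuous_at_imp_continuous_on ballI) (metis has_derivative_continuous)
  then show ?thesis by (rule borel_measurable_continuous_onI)
qed

lemma inner_grad_fbar_shift_le:
  assumes "0 \<le> c"
  shows "inner (grad_fbar x) b - inner (grad_fbar (x - c *\<^sub>R m)) b
    \<le> L * c / 2 * ((norm m)\<^sup>2 + (norm b)\<^sup>2)"
proof -
  have "inner (grad_fbar x) b - inner (grad_fbar (x - c *\<^sub>R m)) b
      \<le> norm (grad_fbar x - grad_fbar (x - c *\<^sub>R m)) * norm b"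
    using Cauchy_Schwarz_ineq2[of "grad_fbar x - grad_fbar (x - c *\<^sub>R m)" b]
    by (simp add: inner_diff_left abs_le_iff)
  also have "\<dots> \<le> L * norm (c *\<^sub>R m) * norm b"
    using grad_fbar_Lipschitz[of x "x - c *\<^sub>R m"] by (intro mult_right_mono) auto
  also have "\<dots> = L * c * (norm m * norm b)"
    using assms by simp
  also have "\<dots> \<le> L * c * (((norm m)\<^sup>2 + (norm b)\<^sup>2) / 2)"
    using sum_squares_bound[of "norm m" "norm b"] L_nonneg assms
    by (intro mult_left_mono) (auto simp: power2_eq_square)
  finally show ?thesis by simp
qed

lemma grad_fbar_consensus_error:
  "(norm (grad_fbar (avg xs) - avg (\<lambda>i. gf i (xs i))))\<^sup>2
    \<le> L\<^sup>2 / real CARD('n) * (\<Sum>i\<in>UNIV. (norm (xs i - avg xs))\<^sup>2)"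
proof -
  have "(norm (grad_fbar (avg xs) - avg (\<lambda>i. gf i (xs i))))\<^sup>2
      \<le> avg (\<lambda>i. (norm (gf i (avg xs) - gf i (xs i)))\<^sup>2)"
    using power2_norm_avg_le by (metis avg_diff)
  also have "\<dots> \<le> avg (\<lambda>i. L\<^sup>2 * (norm (xs i - avg xs))\<^sup>2)"
  proof (rule avg_mono)
    fix i
    have "norm (gf i (avg xs) - gf i (xs i)) \<le> L * norm (xs i - avg xs)"
      using smooth[of i "avg xs" "xs i"] by (simp add: norm_minus_commute)
    then show "(norm (gf i (avg xs) - gf i (xs i)))\<^sup>2 \<le> L\<^sup>2 * (norm (xs i - avg xs))\<^sup>2"
      by (metis norm_ge_zero power_mono power_mult_distrib)
  qed
  also have "\<dots> = L\<^sup>2 / real CARD('n) * (\<Sum>i\<in>UNIV. (norm (xs i - avg xs))\<^sup>2)"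
    by (simp add: avg_def sum_distrib_left)
  finally show ?thesis .
qed

lemma edm_step_bound:
  fixes xs :: "'n \<Rightarrow> 'v" and m e :: 'v
  assumes \<alpha>: "0 < \<alpha>" and \<beta>: "0 \<le> \<beta>" "\<beta> < 1"
  defines "xb \<equiv> avg xs" and "b \<equiv> avg (\<lambda>i. gf i (xs i))"
    and "z \<equiv> avg xs - (\<alpha> * \<beta> / (1 - \<beta>)) *\<^sub>R m"
  shows "fbar (z - \<alpha> *\<^sub>R (b + e))
    \<le> fbar z + \<alpha>\<^sup>2 * L * \<beta> / (2 * (1 - \<beta>)) * (norm m)\<^sup>2
     + \<alpha> * L\<^sup>2 / (2 * real CARD('n)) * (\<Sum>i\<in>UNIV. (norm (xs i - xb))\<^sup>2)
     - \<alpha> / 2 * (1 - \<beta> * \<alpha> * L / (1 - \<beta>) - \<alpha> * L) * (norm b)\<^sup>2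
     - \<alpha> / 2 * (norm (grad_fbar xb))\<^sup>2
     + (- \<alpha> * inner (grad_fbar z) e + \<alpha>\<^sup>2 * L * inner b e + \<alpha>\<^sup>2 * L / 2 * (norm e)\<^sup>2)"
proof -
  define c where "c = \<alpha> * \<beta> / (1 - \<beta>)"
  define N where "N = real CARD('n)"
  define S where "S = (\<Sum>i\<in>UNIV. (norm (xs i - xb))\<^sup>2)"
  have c: "0 \<le> c" using \<alpha> \<beta> by (simp add: c_def)
  have descent: "fbar (z - \<alpha> *\<^sub>R (b + e)) \<le> fbar z - \<alpha> * inner (grad_fbar z) b - \<alpha> * inner (grad_fbar z) e
      + L / 2 * \<alpha>\<^sup>2 * ((norm b)\<^sup>2 + 2 * inner b e + (norm e)\<^sup>2)"
  proof -
    have "(norm (b + e))\<^sup>2 = (norm b)\<^sup>2 + 2 * inner b e + (norm e)\<^sup>2"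
      by (simp add: power2_norm_eq_inner inner_add_left inner_add_right inner_commute[of e b])
    then have "(norm (z - \<alpha> *\<^sub>R (b + e) - z))\<^sup>2 = \<alpha>\<^sup>2 * ((norm b)\<^sup>2 + 2 * inner b e + (norm e)\<^sup>2)"
      by (simp add: power_mult_distrib)
    then show ?thesis
      using fbar_descent[of "z - \<alpha> *\<^sub>R (b + e)" z] by (simp add: inner_add_right algebra_simps)
  qed
  have "inner (grad_fbar xb) b - inner (grad_fbar z) b \<le> L * c / 2 * ((norm m)\<^sup>2 + (norm b)\<^sup>2)"
    using inner_grad_fbar_shift_le[OF c, where x = xb and m = m and b = b]
    by (simp add: z_def xb_def flip: c_def)
  from mult_left_mono[OF this, of \<alpha>] \<alpha>
  have shift: "- (\<alpha> * inner (grad_fbar z) b) + \<alpha> * inner (grad_fbar xb) b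
      \<le> \<alpha> * L * c / 2 * ((norm m)\<^sup>2 + (norm b)\<^sup>2)"
    by (simp add: right_diff_distrib mult.assoc)
  have polarize: "- (\<alpha> * inner (grad_fbar xb) b)
      = \<alpha> / 2 * (norm (grad_fbar xb - b))\<^sup>2 - \<alpha> / 2 * (norm (grad_fbar xb))\<^sup>2 - \<alpha> / 2 * (norm b)\<^sup>2"
    by (simp add: power2_norm_eq_inner inner_diff_left inner_diff_right
        inner_commute[of b "grad_fbar xb"] algebra_simps)
  have consensus: "\<alpha> / 2 * (norm (grad_fbar xb - b))\<^sup>2 \<le> \<alpha> / 2 * (L\<^sup>2 / N * S)"
    using grad_fbar_consensus_error[of xs] \<alpha>
    unfolding xb_def b_def N_def S_def by (intro mult_left_mono) auto
  have "fbar (z - \<alpha> *\<^sub>R (b + e)) \<le> fbar z + \<alpha> * L * c / 2 * ((norm m)\<^sup>2 + (norm b)\<^sup>2)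
      + (\<alpha> / 2 * (L\<^sup>2 / N * S) - \<alpha> / 2 * (norm (grad_fbar xb))\<^sup>2 - \<alpha> / 2 * (norm b)\<^sup>2)
      - \<alpha> * inner (grad_fbar z) e + L / 2 * \<alpha>\<^sup>2 * ((norm b)\<^sup>2 + 2 * inner b e + (norm e)\<^sup>2)"
    using descent shift polarize consensus by linarith
  also have "\<dots> = fbar z + \<alpha>\<^sup>2 * L * \<beta> / (2 * (1 - \<beta>)) * (norm m)\<^sup>2 + \<alpha> * L\<^sup>2 / (2 * N) * S
      - \<alpha> / 2 * (1 - \<beta> * \<alpha> * L / (1 - \<beta>) - \<alpha> * L) * (norm b)\<^sup>2
      - \<alpha> / 2 * (norm (grad_fbar xb))\<^sup>2
      + (- \<alpha> * inner (grad_fbar z) e + \<alpha>\<^sup>2 * L * inner b e + \<alpha>\<^sup>2 * L / 2 * (norm e)\<^sup>2)"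
  proof -
    have "1 - \<beta> \<noteq> 0" "N > 0" using \<beta> by (simp_all add: N_def)
    then show ?thesis by (simp add: c_def divide_simps) algebra
  qed
  finally show ?thesis unfolding S_def N_def .
qed

lemma fbar_quadratic_bound:
  assumes bdd_below: "\<And>i. \<exists>b. \<forall>x. b \<le> f i x"
  obtains K where "\<And>v. \<bar>fbar v\<bar> \<le> K * (1 + (norm v)\<^sup>2)"
proof -
  obtain lb where lb: "\<And>i x. lb i \<le> f i x" using bdd_below by metis
  define K where "K = \<bar>fbar 0\<bar> + norm (grad_fbar 0) + L + \<bar>avg lb\<bar>"
  have "\<bar>fbar v\<bar> \<le> K * (1 + (norm v)\<^sup>2)" for v
  proof -
    define r where "r = (norm v)\<^sup>2"
    have "2 * norm v \<le> r + 1"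
      using sum_squares_bound[of "norm v" 1] by (simp add: r_def)
    moreover have "0 \<le> norm v" "0 \<le> r" by (simp_all add: r_def)
    ultimately have r: "0 \<le> r" "norm v \<le> 1 + r" by linarith+
    have lower: "avg lb \<le> fbar v" by (intro avg_mono lb)
    have "fbar v \<le> fbar 0 + inner (grad_fbar 0) v + L / 2 * r"
      using fbar_descent[of v 0] by (simp add: r_def)
    also have "inner (grad_fbar 0) v \<le> norm (grad_fbar 0) * (1 + r)"
      using norm_cauchy_schwarz[of "grad_fbar 0" v] mult_left_mono[OF r(2) norm_ge_zero[of "grad_fbar 0"]]
      by linarith
    finally have upper: "fbar v \<le> fbar 0 + norm (grad_fbar 0) + norm (grad_fbar 0) * r + L / 2 * r"
      by (simp add: distrib_left)
    have "0 \<le> \<bar>fbar 0\<bar> * r" "0 \<le> \<bar>avg lb\<bar> * r" "L / 2 * r \<le> L * r" "0 \<le> norm (grad_fbar 0) * r"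
      using r(1) L_nonneg by simp_all
    moreover have "K * (1 + r) = \<bar>fbar 0\<bar> + norm (grad_fbar 0) + L + \<bar>avg lb\<bar>
        + \<bar>fbar 0\<bar> * r + norm (grad_fbar 0) * r + L * r + \<bar>avg lb\<bar> * r"
      by (simp add: K_def algebra_simps)
    ultimately show ?thesis
      using lower upper L_nonneg abs_ge_self[of "fbar 0"] abs_ge_minus_self[of "avg lb"]
        abs_ge_zero[of "fbar 0"] norm_ge_zero[of "grad_fbar 0"]
      unfolding abs_le_iff r_def[symmetric] by (intro conjI) linarith+
  qed
  then show ?thesis by (rule that)
qed

end

section \<open>Square-integrable random vectors\<close>

definition sq_integrable :: "'a measure \<Rightarrow> ('a \<Rightarrow> 'b::real_normed_vector) \<Rightarrow> bool" where
  "sq_integrable M v \<longleftrightarrow> v \<in> borel_measurable M \<and> integrable M (\<lambda>\<omega>. (norm (v \<omega>))\<^sup>2)"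

lemma sq_integrableD:
  "sq_integrable M v \<Longrightarrow> v \<in> borel_measurable M"
  "sq_integrable M v \<Longrightarrow> integrable M (\<lambda>\<omega>. (norm (v \<omega>))\<^sup>2)"
  by (simp_all add: sq_integrable_def)

lemma power2_norm_add_le: "(norm (u + v))\<^sup>2 \<le> 2 * (norm u)\<^sup>2 + 2 * (norm v)\<^sup>2"
proof -
  have "(norm (u + v))\<^sup>2 \<le> (norm u + norm v)\<^sup>2" by (intro power_mono norm_triangle_ineq) auto
  also have "\<dots> \<le> 2 * (norm u)\<^sup>2 + 2 * (norm v)\<^sup>2"
    using sum_squares_bound[of "norm u" "norm v"] by (simp add: power2_sum)
  finally show ?thesis .
qed

lemma abs_mult_le_sum_squares: "\<bar>a * b\<bar> \<le> a\<^sup>2 + b\<^sup>2" for a b :: real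
proof -
  have "2 * (\<bar>a\<bar> * \<bar>b\<bar>) \<le> a\<^sup>2 + b\<^sup>2" "0 \<le> \<bar>a\<bar> * \<bar>b\<bar>"
    using sum_squares_bound[of "\<bar>a\<bar>" "\<bar>b\<bar>"] by (simp_all add: mult.assoc)
  then show ?thesis unfolding abs_mult by linarith
qed

context finite_measure
begin

lemma sq_integrable_const: "sq_integrable M (\<lambda>_. c)"
  by (simp add: sq_integrable_def)

lemma sq_integrable_dominated:
  fixes u :: "'a \<Rightarrow> 'b::euclidean_space"
  assumes "u \<in> borel_measurable M" "sq_integrable M w" "\<And>\<omega>. norm (u \<omega>) \<le> norm (w \<omega>)"
  shows "sq_integrable M u"
  unfolding sq_integrable_def
proof
  show "integrable M (\<lambda>\<omega>. (norm (u \<omega>))\<^sup>2)"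
    by (rule Bochner_Integration.integrable_bound[OF sq_integrableD(2)[OF assms(2)]])
      (use assms in \<open>auto intro!: power_mono\<close>)
qed fact

lemma sq_integrable_add:
  fixes u v :: "'a \<Rightarrow> 'b::euclidean_space"
  assumes u: "sq_integrable M u" and v: "sq_integrable M v"
  shows "sq_integrable M (\<lambda>\<omega>. u \<omega> + v \<omega>)"
  unfolding sq_integrable_def
proof
  have [measurable]: "u \<in> borel_measurable M" "v \<in> borel_measurable M"
    using u v by (simp_all add: sq_integrable_def)
  show "(\<lambda>\<omega>. u \<omega> + v \<omega>) \<in> borel_measurable M" by measurable
  show "integrable M (\<lambda>\<omega>. (norm (u \<omega> + v \<omega>))\<^sup>2)"
    by (rule Bochner_Integration.integrable_bound[where f = "\<lambda>\<omega>. 2 * (norm (u \<omega>))\<^sup>2 + 2 * (norm (v \<omega>))\<^sup>2"])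
      (use u v power2_norm_add_le in \<open>auto simp: sq_integrable_def\<close>)
qed

lemma sq_integrable_scaleR:
  "sq_integrable M v \<Longrightarrow> sq_integrable M (\<lambda>\<omega>. c *\<^sub>R v \<omega>)"
  by (auto simp: sq_integrable_def power_mult_distrib)

lemma sq_integrable_diff:
  fixes u v :: "'a \<Rightarrow> 'b::euclidean_space"
  shows "sq_integrable M u \<Longrightarrow> sq_integrable M v \<Longrightarrow> sq_integrable M (\<lambda>\<omega>. u \<omega> - v \<omega>)"
  using sq_integrable_add[of u "\<lambda>\<omega>. (-1) *\<^sub>R v \<omega>"] sq_integrable_scaleR[of v "-1"] by simp

lemma sq_integrable_sum:
  fixes v :: "'i \<Rightarrow> 'a \<Rightarrow> 'b::euclidean_space"
  shows "finite I \<Longrightarrow> (\<And>i. i \<in> I \<Longrightarrow> sq_integrable M (v i)) \<Longrightarrow> sq_integrable M (\<lambda>\<omega>. \<Sum>i\<in>I. v i \<omega>)"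
  by (induction I rule: finite_induct) (simp_all add: sq_integrable_const sq_integrable_add)

lemma sq_integrable_avg:
  fixes v :: "'a \<Rightarrow> 'n::finite \<Rightarrow> 'b::euclidean_space"
  shows "(\<And>i. sq_integrable M (\<lambda>\<omega>. v \<omega> i)) \<Longrightarrow> sq_integrable M (\<lambda>\<omega>. avg (v \<omega>))"
  unfolding avg_def by (intro sq_integrable_scaleR sq_integrable_sum) auto

lemma sq_integrable_mix:
  fixes v :: "'a \<Rightarrow> 'n::finite \<Rightarrow> 'b::euclidean_space"
  shows "(\<And>j. sq_integrable M (\<lambda>\<omega>. v \<omega> j)) \<Longrightarrow> sq_integrable M (\<lambda>\<omega>. mix W (v \<omega>) k)"
  unfolding mix_def by (intro sq_integrable_sum sq_integrable_scaleR) auto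

lemma sq_integrable_Lipschitz_comp:
  fixes g :: "'b::euclidean_space \<Rightarrow> 'c::euclidean_space"
  assumes lip: "\<And>x y. norm (g x - g y) \<le> L * norm (x - y)"
    and g: "g \<in> borel_measurable borel" and v: "sq_integrable M v"
  shows "sq_integrable M (\<lambda>\<omega>. g (v \<omega>))"
proof -
  have [measurable]: "g \<in> borel_measurable borel" "v \<in> borel_measurable M"
    using g v by (simp_all add: sq_integrable_def)
  have "sq_integrable M (\<lambda>\<omega>. g 0 + (g (v \<omega>) - g 0))"
  proof (rule sq_integrable_add[OF sq_integrable_const sq_integrable_dominated])
    show "(\<lambda>\<omega>. g (v \<omega>) - g 0) \<in> borel_measurable M" by measurable
    show "sq_integrable M (\<lambda>\<omega>. L *\<^sub>R v \<omega>)" by (rule sq_integrable_scaleR[OF v])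
    show "norm (g (v \<omega>) - g 0) \<le> norm (L *\<^sub>R v \<omega>)" for \<omega>
      using lip[of "v \<omega>" 0] mult_right_mono[OF abs_ge_self[of L] norm_ge_zero[of "v \<omega>"]]
      by simp
  qed
  then show ?thesis by simp
qed

lemma sq_integrable_imp_integrable:
  fixes v :: "'a \<Rightarrow> 'b::euclidean_space"
  assumes "sq_integrable M v"
  shows "integrable M v"
proof (rule Bochner_Integration.integrable_bound)
  show "integrable M (\<lambda>\<omega>. 1 + (norm (v \<omega>))\<^sup>2)"
    using assms by (simp add: sq_integrable_def)
  have "norm x \<le> 1 + (norm x)\<^sup>2" for x :: 'b
  proof -
    have "2 * norm x \<le> (norm x)\<^sup>2 + 1" using sum_squares_bound[of "norm x" 1] by simp
    then show ?thesis using norm_ge_zero[of x] by linarith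
  qed
  then show "AE \<omega> in M. norm (v \<omega>) \<le> norm (1 + (norm (v \<omega>))\<^sup>2)"
    by (simp add: order_trans[OF _ abs_ge_self])
qed (use assms in \<open>simp add: sq_integrable_def\<close>)

lemma sq_integrable_integrable_inner:
  fixes u v :: "'a \<Rightarrow> 'b::euclidean_space"
  assumes "sq_integrable M u" "sq_integrable M v"
  shows "integrable M (\<lambda>\<omega>. inner (u \<omega>) (v \<omega>))"
proof (rule Bochner_Integration.integrable_bound)
  show "integrable M (\<lambda>\<omega>. (norm (u \<omega>))\<^sup>2 + (norm (v \<omega>))\<^sup>2)"
    using assms by (simp add: sq_integrable_def)
  show "(\<lambda>\<omega>. inner (u \<omega>) (v \<omega>)) \<in> borel_measurable M"
    using assms by (auto simp: sq_integrable_def intro!: borel_measurable_inner)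
  have "\<bar>inner x y\<bar> \<le> (norm x)\<^sup>2 + (norm y)\<^sup>2" for x y :: 'b
    using Cauchy_Schwarz_ineq2[of x y] abs_mult_le_sum_squares[of "norm x" "norm y"] by simp
  then show "AE \<omega> in M. norm (inner (u \<omega>) (v \<omega>)) \<le> norm ((norm (u \<omega>))\<^sup>2 + (norm (v \<omega>))\<^sup>2)"
    by simp
qed

end

section \<open>Integrating out one coordinate of an independent family\<close>

context prob_space
begin

lemma indep_var_coordinate_rest:
  fixes Y :: "'k \<Rightarrow> 'a \<Rightarrow> 'b::topological_space"
  assumes indep: "indep_vars (\<lambda>_. borel) Y UNIV"
  shows "indep_var (PiM UNIV (\<lambda>_. borel)) (\<lambda>\<omega>. (\<lambda>j. Y j \<omega>)(k := undefined))
    (PiM UNIV (\<lambda>_. borel)) (\<lambda>\<omega>. restrict (\<lambda>j. Y j \<omega>) {k})"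
proof -
  have split: "indep_var (PiM (- {k}) (\<lambda>_. borel)) (\<lambda>\<omega>. restrict (\<lambda>j. Y j \<omega>) (- {k}))
      (PiM {k} (\<lambda>_. borel)) (\<lambda>\<omega>. restrict (\<lambda>j. Y j \<omega>) {k})"
    by (rule indep_var_restrict[OF indep]) auto
  have "(\<lambda>a. a(k := undefined)) \<in> PiM (- {k}) (\<lambda>_. borel) \<rightarrow>\<^sub>M PiM UNIV (\<lambda>_. borel)"
  proof (rule measurable_PiM_single')
    fix j
    show "(\<lambda>a. (a(k := undefined)) j) \<in> PiM (- {k}) (\<lambda>_. borel) \<rightarrow>\<^sub>M borel"
      by (cases "j = k") (auto intro: measurable_component_singleton)
  qed simp
  moreover have "(\<lambda>a. restrict a {k}) \<in> PiM {k} (\<lambda>_. borel) \<rightarrow>\<^sub>M PiM UNIV (\<lambda>_. borel)"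
  proof (rule measurable_PiM_single')
    fix j
    show "(\<lambda>a. restrict a {k} j) \<in> PiM {k} (\<lambda>_. borel) \<rightarrow>\<^sub>M borel"
      by (cases "j = k") (auto intro: measurable_component_singleton)
  qed simp
  ultimately have "indep_var (PiM UNIV (\<lambda>_. borel))
      ((\<lambda>a. a(k := undefined)) \<circ> (\<lambda>\<omega>. restrict (\<lambda>j. Y j \<omega>) (- {k})))
      (PiM UNIV (\<lambda>_. borel)) ((\<lambda>a. restrict a {k}) \<circ> (\<lambda>\<omega>. restrict (\<lambda>j. Y j \<omega>) {k}))"
    by (rule indep_var_compose[OF split])
  moreover have "(\<lambda>a. a(k := undefined)) \<circ> (\<lambda>\<omega>. restrict (\<lambda>j. Y j \<omega>) (- {k}))
      = (\<lambda>\<omega>. (\<lambda>j. Y j \<omega>)(k := undefined))"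
    by (auto simp: fun_eq_iff)
  ultimately show ?thesis by (simp add: comp_def)
qed

lemma nn_integral_indep_coordinate_le:
  fixes Y :: "'k \<Rightarrow> 'a \<Rightarrow> 'b::topological_space" and \<phi> :: "('k \<Rightarrow> 'b) \<Rightarrow> 'b \<Rightarrow> ennreal"
  assumes indep: "indep_vars (\<lambda>_. borel) Y UNIV"
    and \<phi>_meas: "(\<lambda>(a, c). \<phi> a c) \<in> borel_measurable (PiM UNIV (\<lambda>_. borel) \<Otimes>\<^sub>M borel)"
    and \<phi>_upd: "\<And>a c. \<phi> (a(k := c)) = \<phi> a"
    and bound: "\<And>a. (\<integral>\<^sup>+\<omega>. \<phi> a (Y k \<omega>) \<partial>M) \<le> B"
  shows "(\<integral>\<^sup>+\<omega>. \<phi> (\<lambda>j. Y j \<omega>) (Y k \<omega>) \<partial>M) \<le> B"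
proof -
  let ?PU = "PiM UNIV (\<lambda>_. borel) :: ('k \<Rightarrow> 'b) measure"
  define R where "R \<omega> = (\<lambda>j. Y j \<omega>)(k := undefined)" for \<omega>
  define C where "C \<omega> = restrict (\<lambda>j. Y j \<omega>) {k}" for \<omega>
  have ind: "indep_var ?PU R ?PU C"
    unfolding R_def[abs_def] C_def[abs_def] by (rule indep_var_coordinate_rest[OF indep])
  have [measurable]: "R \<in> M \<rightarrow>\<^sub>M ?PU" "C \<in> M \<rightarrow>\<^sub>M ?PU"
    using indep_var_rv1[OF ind] indep_var_rv2[OF ind] by simp_all
  interpret P: prob_space "distr M ?PU R" by (rule prob_space_distr) simp
  interpret Q: prob_space "distr M ?PU C" by (rule prob_space_distr) simp
  interpret PQ: pair_prob_space "distr M ?PU R" "distr M ?PU C" ..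
  define \<psi> where "\<psi> z = \<phi> (fst z) (snd z k)" for z
  have [measurable]: "\<psi> \<in> borel_measurable (?PU \<Otimes>\<^sub>M ?PU)"
    unfolding \<psi>_def using measurable_compose[OF _ \<phi>_meas, of "\<lambda>z. (fst z, snd z k)"] by simp
  have "(\<integral>\<^sup>+\<omega>. \<phi> (\<lambda>j. Y j \<omega>) (Y k \<omega>) \<partial>M) = (\<integral>\<^sup>+\<omega>. \<psi> (R \<omega>, C \<omega>) \<partial>M)"
    using \<phi>_upd[of "\<lambda>j. Y j _" undefined] by (simp add: \<psi>_def R_def C_def)
  also have "\<dots> = (\<integral>\<^sup>+z. \<psi> z \<partial>distr M (?PU \<Otimes>\<^sub>M ?PU) (\<lambda>\<omega>. (R \<omega>, C \<omega>)))"
    by (rule nn_integral_distr[symmetric]) simp_all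
  also have "\<dots> = (\<integral>\<^sup>+a. \<integral>\<^sup>+c. \<psi> (a, c) \<partial>distr M ?PU C \<partial>distr M ?PU R)"
    using ind by (simp add: indep_var_distribution_eq Q.nn_integral_fst)
  also have "\<dots> \<le> (\<integral>\<^sup>+a. B \<partial>distr M ?PU R)"
  proof (rule nn_integral_mono)
    fix a
    have "(\<lambda>c. \<psi> (a, c)) \<in> borel_measurable ?PU"
      by (rule measurable_Pair2[where ?M1.0 = ?PU]) (simp_all add: space_PiM)
    then have "(\<integral>\<^sup>+c. \<psi> (a, c) \<partial>distr M ?PU C) = (\<integral>\<^sup>+\<omega>. \<phi> a (Y k \<omega>) \<partial>M)"
      by (subst nn_integral_distr) (simp_all add: \<psi>_def C_def)
    then show "(\<integral>\<^sup>+c. \<psi> (a, c) \<partial>distr M ?PU C) \<le> B" using bound by simp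
  qed
  also have "\<dots> = B" using P.emeasure_space_1 by simp
  finally show ?thesis .
qed

lemma integral_indep_coordinate_eq_0:
  fixes Y :: "'k \<Rightarrow> 'a \<Rightarrow> 'b::topological_space" and \<phi> :: "('k \<Rightarrow> 'b) \<Rightarrow> 'b \<Rightarrow> real"
  assumes indep: "indep_vars (\<lambda>_. borel) Y UNIV"
    and \<phi>_meas: "(\<lambda>(a, c). \<phi> a c) \<in> borel_measurable (PiM UNIV (\<lambda>_. borel) \<Otimes>\<^sub>M borel)"
    and \<phi>_upd: "\<And>a c. \<phi> (a(k := c)) = \<phi> a"
    and int: "integrable M (\<lambda>\<omega>. \<phi> (\<lambda>j. Y j \<omega>) (Y k \<omega>))"
    and zero: "\<And>a. (\<integral>\<omega>. \<phi> a (Y k \<omega>) \<partial>M) = 0"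
  shows "(\<integral>\<omega>. \<phi> (\<lambda>j. Y j \<omega>) (Y k \<omega>) \<partial>M) = 0"
proof -
  let ?PU = "PiM UNIV (\<lambda>_. borel) :: ('k \<Rightarrow> 'b) measure"
  define R where "R \<omega> = (\<lambda>j. Y j \<omega>)(k := undefined)" for \<omega>
  define C where "C \<omega> = restrict (\<lambda>j. Y j \<omega>) {k}" for \<omega>
  have ind: "indep_var ?PU R ?PU C"
    unfolding R_def[abs_def] C_def[abs_def] by (rule indep_var_coordinate_rest[OF indep])
  have [measurable]: "R \<in> M \<rightarrow>\<^sub>M ?PU" "C \<in> M \<rightarrow>\<^sub>M ?PU"
    using indep_var_rv1[OF ind] indep_var_rv2[OF ind] by simp_all
  interpret Q: prob_space "distr M ?PU C" by (rule prob_space_distr) simp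
  interpret PQ: pair_prob_space "distr M ?PU R" "distr M ?PU C"
    by (intro pair_prob_space.intro pair_sigma_finite.intro prob_space_imp_sigma_finite
        prob_space_distr) simp_all
  define \<psi> where "\<psi> z = \<phi> (fst z) (snd z k)" for z
  have [measurable]: "\<psi> \<in> borel_measurable (?PU \<Otimes>\<^sub>M ?PU)"
    unfolding \<psi>_def using measurable_compose[OF _ \<phi>_meas, of "\<lambda>z. (fst z, snd z k)"] by simp
  have eq: "\<phi> (\<lambda>j. Y j \<omega>) (Y k \<omega>) = \<psi> (R \<omega>, C \<omega>)" for \<omega>
    using \<phi>_upd[of "\<lambda>j. Y j \<omega>" undefined] by (simp add: \<psi>_def R_def C_def)
  have prod: "distr M (?PU \<Otimes>\<^sub>M ?PU) (\<lambda>\<omega>. (R \<omega>, C \<omega>)) = distr M ?PU R \<Otimes>\<^sub>M distr M ?PU C"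
    using ind by (simp add: indep_var_distribution_eq)
  have "integrable (distr M ?PU R \<Otimes>\<^sub>M distr M ?PU C) \<psi>"
    unfolding prod[symmetric] by (subst integrable_distr_eq) (use int in \<open>simp_all add: eq\<close>)
  then have "(\<integral>z. \<psi> z \<partial>(distr M ?PU R \<Otimes>\<^sub>M distr M ?PU C))
      = (\<integral>a. \<integral>c. \<psi> (a, c) \<partial>distr M ?PU C \<partial>distr M ?PU R)"
    by (rule PQ.integral_fst'[symmetric])
  also have "\<dots> = 0"
  proof -
    have "(\<integral>c. \<psi> (a, c) \<partial>distr M ?PU C) = 0" for a
    proof -
      have "(\<lambda>c. \<psi> (a, c)) \<in> borel_measurable ?PU"
        by (rule measurable_Pair2[where ?M1.0 = ?PU]) (simp_all add: space_PiM)
      then show ?thesis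
        using zero[of a] by (subst integral_distr) (simp_all add: \<psi>_def C_def)
    qed
    then show ?thesis by simp
  qed
  finally show ?thesis
    unfolding eq prod[symmetric] by (subst (asm) integral_distr) simp_all
qed

end

section \<open>The EDM iterates as random variables\<close>

locale edm = prob_space M + smooth_agents f gf L
  for M :: "'a measure"
    and f :: "'n::finite \<Rightarrow> real^'d::finite \<Rightarrow> real"
    and gf :: "'n \<Rightarrow> real^'d \<Rightarrow> real^'d"
    and L :: real +
  fixes W :: "real^'n^'n"
    and gF :: "'n \<Rightarrow> real^'d \<Rightarrow> real^'p::finite \<Rightarrow> real^'d"
    and \<xi> :: "'n \<Rightarrow> nat \<Rightarrow> 'a \<Rightarrow> real^'p"
    and X Mm :: "nat \<Rightarrow> 'a \<Rightarrow> 'n \<Rightarrow> real^'d"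
    and x0 :: "real^'d"
    and \<alpha> \<beta> \<sigma> :: real
  assumes mixing: "mixing_matrix W"
    and gF_meas: "\<And>i. (\<lambda>(x, s). gF i x s) \<in> borel_measurable borel"
    and bdd_below: "\<And>i. \<exists>b. \<forall>x. b \<le> f i x"
    and \<xi>_meas: "\<And>i s. \<xi> i s \<in> borel_measurable M"
    and \<xi>_indep: "indep_vars (\<lambda>_. borel) (\<lambda>(i, s). \<xi> i s) UNIV"
    and unbiased: "\<And>s i y j. y \<in> borel_measurable (filt M \<xi> s) \<Longrightarrow>
        AE \<omega> in M. real_cond_exp M (filt M \<xi> s)
           (\<lambda>\<omega>. (gF i (y \<omega>) (\<xi> i s \<omega>) - gf i (y \<omega>)) $ j) \<omega> = 0"
    and variance: "\<And>s i y. y \<in> borel_measurable (filt M \<xi> s) \<Longrightarrow>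
        AE \<omega> in M. nn_cond_exp M (filt M \<xi> s)
           (\<lambda>\<omega>. ennreal ((norm (gF i (y \<omega>) (\<xi> i s \<omega>) - gf i (y \<omega>)))\<^sup>2)) \<omega> \<le> ennreal (\<sigma>\<^sup>2)"
    and alpha: "0 < \<alpha>"
    and beta: "0 \<le> \<beta>" "\<beta> < 1"
    and iter: "edm_iterates W \<alpha> \<beta> gF \<xi> x0 X Mm"
begin

abbreviation paths :: "('n \<times> nat \<Rightarrow> real^'p) measure" where
  "paths \<equiv> PiM UNIV (\<lambda>_. borel)"

definition noise :: "'a \<Rightarrow> 'n \<times> nat \<Rightarrow> real^'p" where
  "noise \<omega> = (\<lambda>(i, s). \<xi> i s \<omega>)"

lemma noise_apply [simp]: "noise \<omega> (i, s) = \<xi> i s \<omega>"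
  by (simp add: noise_def)

lemma noise_measurable [measurable]: "noise \<in> M \<rightarrow>\<^sub>M paths"
  unfolding noise_def by (rule measurable_PiM_single') (auto simp: \<xi>_meas split: prod.splits)

lemma gF_measurable [measurable (raw)]:
  "a \<in> N \<rightarrow>\<^sub>M borel \<Longrightarrow> b \<in> N \<rightarrow>\<^sub>M borel \<Longrightarrow> (\<lambda>w. gF i (a w) (b w)) \<in> N \<rightarrow>\<^sub>M borel"
  using measurable_compose[OF borel_measurable_Pair gF_meas[of i]] by simp

lemma filt_subalgebra: "subalgebra M (filt M \<xi> s)"
proof -
  let ?G = "{\<xi> i s' -` B \<inter> space M | i s' B. s' < s \<and> B \<in> sets borel}"
  have G: "?G \<subseteq> sets M" using \<xi>_meas by (auto intro: measurable_sets)
  have "sets (filt M \<xi> s) \<subseteq> sets M"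
    unfolding filt_def sets_measure_of_conv
    using sets.sigma_sets_subset[OF G] G sets.top by auto
  moreover have "space (filt M \<xi> s) = space M"
    unfolding filt_def by (simp add: space_measure_of_conv)
  ultimately show ?thesis unfolding subalgebra_def by simp
qed

lemma filt_sigma_finite_subalgebra: "sigma_finite_subalgebra M (filt M \<xi> s)"
  by (intro finite_measure_subalgebra_is_sigma_finite finite_measure_subalgebra.intro
      finite_measure_subalgebra_axioms.intro finite_measure_axioms filt_subalgebra)

lemma noise_at_point_second_moment:
  "(\<integral>\<^sup>+\<omega>. ennreal ((norm (gF i x (\<xi> i s \<omega>) - gf i x))\<^sup>2) \<partial>M) \<le> ennreal (\<sigma>\<^sup>2)"
proof -
  interpret S: sigma_finite_subalgebra M "filt M \<xi> s" by (rule filt_sigma_finite_subalgebra)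
  define g where "g = (\<lambda>\<omega>. ennreal ((norm (gF i x (\<xi> i s \<omega>) - gf i x))\<^sup>2))"
  have [measurable]: "g \<in> borel_measurable M" unfolding g_def using \<xi>_meas by measurable
  have "(\<integral>\<^sup>+\<omega>. g \<omega> \<partial>M) = (\<integral>\<^sup>+\<omega>. 1 * nn_cond_exp M (filt M \<xi> s) g \<omega> \<partial>M)"
    using S.nn_cond_exp_intg[of "\<lambda>_. 1" g] by simp
  also have "\<dots> \<le> (\<integral>\<^sup>+\<omega>. ennreal (\<sigma>\<^sup>2) \<partial>M)"
    using variance[of "\<lambda>_. x" s i] by (intro nn_integral_mono_AE) (auto simp: g_def)
  also have "\<dots> = ennreal (\<sigma>\<^sup>2)" by (simp add: emeasure_space_1)
  finally show ?thesis unfolding g_def .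
qed

lemma noise_at_point_sq_integrable: "sq_integrable M (\<lambda>\<omega>. gF i x (\<xi> i s \<omega>) - gf i x)"
  unfolding sq_integrable_def
proof
  show "(\<lambda>\<omega>. gF i x (\<xi> i s \<omega>) - gf i x) \<in> borel_measurable M" using \<xi>_meas by measurable
  then show "integrable M (\<lambda>\<omega>. (norm (gF i x (\<xi> i s \<omega>) - gf i x))\<^sup>2)"
    using noise_at_point_second_moment[of i x s]
    by (intro integrableI_bounded) (auto simp: order_le_less_trans)
qed

lemma noise_at_point_integrable: "integrable M (\<lambda>\<omega>. gF i x (\<xi> i s \<omega>) - gf i x)"
  by (rule sq_integrable_imp_integrable[OF noise_at_point_sq_integrable])

lemma noise_at_point_mean_zero: "(\<integral>\<omega>. gF i x (\<xi> i s \<omega>) - gf i x \<partial>M) = 0"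
proof (rule vec_eq_iff[THEN iffD2], rule allI)
  interpret S: sigma_finite_subalgebra M "filt M \<xi> s" by (rule filt_sigma_finite_subalgebra)
  fix k
  have int: "integrable M (\<lambda>\<omega>. (gF i x (\<xi> i s \<omega>) - gf i x) $ k)"
    using integrable_bounded_linear[OF bounded_linear_vec_nth noise_at_point_integrable] .
  have "(\<integral>\<omega>. gF i x (\<xi> i s \<omega>) - gf i x \<partial>M) $ k = (\<integral>\<omega>. (gF i x (\<xi> i s \<omega>) - gf i x) $ k \<partial>M)"
    by (rule integral_bounded_linear[OF bounded_linear_vec_nth noise_at_point_integrable, symmetric])
  also have "\<dots> = (\<integral>\<omega>. real_cond_exp M (filt M \<xi> s) (\<lambda>\<omega>. (gF i x (\<xi> i s \<omega>) - gf i x) $ k) \<omega> \<partial>M)"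
    by (rule S.real_cond_exp_int(2)[OF int, symmetric])
  also have "\<dots> = (\<integral>\<omega>. 0 \<partial>M)"
    using unbiased[of "\<lambda>_. x" s i k] by (intro integral_cong_AE) auto
  finally show "(\<integral>\<omega>. gF i x (\<xi> i s \<omega>) - gf i x \<partial>M) $ k = 0 $ k" by simp
qed

definition momentum_step ::
  "nat \<Rightarrow> ('n \<Rightarrow> real^'d) \<Rightarrow> ('n \<Rightarrow> real^'d) \<Rightarrow> ('n \<times> nat \<Rightarrow> real^'p) \<Rightarrow> 'n \<Rightarrow> real^'d" where
  "momentum_step t x m a = (\<lambda>i. \<beta> *\<^sub>R m i + (1 - \<beta>) *\<^sub>R gF i (x i) (a (i, t)))"

definition mixing_step ::
  "('n \<Rightarrow> real^'d) \<Rightarrow> ('n \<Rightarrow> real^'d) \<Rightarrow> ('n \<Rightarrow> real^'d) \<Rightarrow> ('n \<Rightarrow> real^'d) \<Rightarrow> 'n \<Rightarrow> real^'d" where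
  "mixing_step x x' m m' = mix W (\<lambda>j. 2 *\<^sub>R x' j - x j - \<alpha> *\<^sub>R m' j + \<alpha> *\<^sub>R m j)"

text \<open>The iterates as functions of the sample path \<open>a (i, s) = \<xi> i s \<omega>\<close>: the triple
  \<open>(X t, X (Suc t), Mm t)\<close>.\<close>

primrec edm_path ::
  "nat \<Rightarrow> ('n \<times> nat \<Rightarrow> real^'p) \<Rightarrow> ('n \<Rightarrow> real^'d) \<times> ('n \<Rightarrow> real^'d) \<times> ('n \<Rightarrow> real^'d)" where
  "edm_path 0 a =
     ((\<lambda>i. x0), mixing_step (\<lambda>i. x0) (\<lambda>i. x0) (\<lambda>i. 0) (momentum_step 0 (\<lambda>i. x0) (\<lambda>i. 0) a),
      momentum_step 0 (\<lambda>i. x0) (\<lambda>i. 0) a)"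
| "edm_path (Suc t) a =
     (let (x, x', m) = edm_path t a; m' = momentum_step (Suc t) x' m a
      in (x', mixing_step x x' m m', m'))"

definition X_path :: "nat \<Rightarrow> ('n \<times> nat \<Rightarrow> real^'p) \<Rightarrow> 'n \<Rightarrow> real^'d" where
  "X_path t a = fst (edm_path t a)"

definition M_path :: "nat \<Rightarrow> ('n \<times> nat \<Rightarrow> real^'p) \<Rightarrow> 'n \<Rightarrow> real^'d" where
  "M_path t a = snd (snd (edm_path t a))"

lemma edm_path_noise: "edm_path t (noise \<omega>) = (X t \<omega>, X (Suc t) \<omega>, Mm t \<omega>)"
proof (induction t)
  case 0
  show ?case
    by (simp add: momentum_step_def mixing_step_def edm_iteratesD(1,2,4)[OF iter])
next
  case (Suc t)
  then show ?case
    by (simp add: momentum_step_def mixing_step_def edm_iteratesD(3,5)[OF iter])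
qed

lemma X_eq_X_path: "X t \<omega> = X_path t (noise \<omega>)"
  and Mm_eq_M_path: "Mm t \<omega> = M_path t (noise \<omega>)"
  by (simp_all add: X_path_def M_path_def edm_path_noise)

lemma edm_path_cong: "(\<And>i s. s \<le> t \<Longrightarrow> a (i, s) = a' (i, s)) \<Longrightarrow> edm_path t a = edm_path t a'"
proof (induction t)
  case (Suc t)
  then have "edm_path t a = edm_path t a'" by simp
  with Suc.prems show ?case by (simp add: momentum_step_def split: prod.split)
qed (simp add: momentum_step_def)

lemma X_path_upd: "X_path t (a((i, t) := c)) = X_path t a"
proof (cases t)
  case (Suc s)
  then have "edm_path s (a((i, t) := c)) = edm_path s a" by (intro edm_path_cong) auto
  with Suc show ?thesis by (simp add: X_path_def Let_def split: prod.split)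
qed (simp add: X_path_def)

lemma M_path_upd: "s < t \<Longrightarrow> M_path s (a((i, t) := c)) = M_path s a"
  unfolding M_path_def by (subst edm_path_cong[of s _ a]) auto

lemma edm_path_measurable:
  "(\<lambda>a. fst (edm_path t a) i) \<in> borel_measurable paths \<and>
   (\<lambda>a. fst (snd (edm_path t a)) i) \<in> borel_measurable paths \<and>
   (\<lambda>a. snd (snd (edm_path t a)) i) \<in> borel_measurable paths"
proof (induction t arbitrary: i)
  case 0
  have [measurable]: "(\<lambda>a. momentum_step 0 (\<lambda>i. x0) (\<lambda>i. 0) a j) \<in> borel_measurable paths" for j
    unfolding momentum_step_def by measurable
  show ?case unfolding edm_path.simps mixing_step_def mix_def by simp measurable
next
  case (Suc t)
  have [measurable]: "(\<lambda>a. fst (edm_path t a) j) \<in> borel_measurable paths"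
    "(\<lambda>a. fst (snd (edm_path t a)) j) \<in> borel_measurable paths"
    "(\<lambda>a. snd (snd (edm_path t a)) j) \<in> borel_measurable paths" for j
    using Suc by blast+
  have [measurable]: "(\<lambda>a. momentum_step (Suc t) (fst (snd (edm_path t a))) (snd (snd (edm_path t a))) a j)
      \<in> borel_measurable paths" for j
    unfolding momentum_step_def by measurable
  show ?case
    unfolding edm_path.simps Let_def mixing_step_def mix_def by (simp add: case_prod_beta) measurable
qed

lemma X_path_measurable [measurable]: "(\<lambda>a. X_path t a i) \<in> borel_measurable paths"
  and M_path_measurable [measurable]: "(\<lambda>a. M_path t a i) \<in> borel_measurable paths"
  using edm_path_measurable unfolding X_path_def M_path_def by blast+

lemma X_measurable [measurable]: "(\<lambda>\<omega>. X t \<omega> i) \<in> borel_measurable M"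
  and Mm_measurable [measurable]: "(\<lambda>\<omega>. Mm t \<omega> i) \<in> borel_measurable M"
  unfolding X_eq_X_path Mm_eq_M_path by measurable

definition grad_noise :: "'n \<Rightarrow> nat \<Rightarrow> 'a \<Rightarrow> real^'d" where
  "grad_noise i t \<omega> = gF i (X t \<omega> i) (\<xi> i t \<omega>) - gf i (X t \<omega> i)"

lemma grad_noise_measurable [measurable]: "grad_noise i t \<in> borel_measurable M"
  unfolding grad_noise_def using \<xi>_meas by measurable

lemma noise_eq: "(\<lambda>j. (\<lambda>(i, s). \<xi> i s) j \<omega>) = noise \<omega>"
  by (auto simp: noise_def fun_eq_iff)

lemma grad_noise_second_moment:
  "(\<integral>\<^sup>+\<omega>. ennreal ((norm (grad_noise i t \<omega>))\<^sup>2) \<partial>M) \<le> ennreal (\<sigma>\<^sup>2)"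
proof -
  define \<phi> where "\<phi> a c = ennreal ((norm (gF i (X_path t a i) c - gf i (X_path t a i)))\<^sup>2)" for a c
  have "(\<lambda>(a, c). \<phi> a c) \<in> borel_measurable (paths \<Otimes>\<^sub>M borel)"
    unfolding \<phi>_def by measurable
  then have "(\<integral>\<^sup>+\<omega>. \<phi> (\<lambda>j. (\<lambda>(i, s). \<xi> i s) j \<omega>) ((\<lambda>(i, s). \<xi> i s) (i, t) \<omega>) \<partial>M) \<le> ennreal (\<sigma>\<^sup>2)"
    by (rule nn_integral_indep_coordinate_le[OF \<xi>_indep])
      (simp_all add: \<phi>_def X_path_upd noise_at_point_second_moment)
  then show ?thesis
    by (simp add: noise_eq \<phi>_def grad_noise_def X_eq_X_path)
qed

lemma grad_noise_sq_integrable: "sq_integrable M (grad_noise i t)"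
  unfolding sq_integrable_def
proof
  show "integrable M (\<lambda>\<omega>. (norm (grad_noise i t \<omega>))\<^sup>2)"
    using grad_noise_second_moment[of i t]
    by (intro integrableI_bounded) (auto simp: order_le_less_trans)
qed simp

lemma grad_noise_variance: "(\<integral>\<omega>. (norm (grad_noise i t \<omega>))\<^sup>2 \<partial>M) \<le> \<sigma>\<^sup>2"
proof -
  have "ennreal (\<integral>\<omega>. (norm (grad_noise i t \<omega>))\<^sup>2 \<partial>M)
      = (\<integral>\<^sup>+\<omega>. ennreal ((norm (grad_noise i t \<omega>))\<^sup>2) \<partial>M)"
    using grad_noise_sq_integrable[THEN sq_integrableD(2)] by (simp add: nn_integral_eq_integral)
  also have "\<dots> \<le> ennreal (\<sigma>\<^sup>2)" by (rule grad_noise_second_moment)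
  finally show ?thesis by (simp add: ennreal_le_iff)
qed

lemma grad_noise_orthogonal:
  assumes [measurable]: "v \<in> borel_measurable paths"
    and v_upd: "\<And>a c. v (a((i, t) := c)) = v a"
    and sq: "sq_integrable M (\<lambda>\<omega>. v (noise \<omega>))"
  shows "(\<integral>\<omega>. inner (v (noise \<omega>)) (grad_noise i t \<omega>) \<partial>M) = 0"
proof -
  define \<phi> where "\<phi> a c = inner (v a) (gF i (X_path t a i) c - gf i (X_path t a i))" for a c
  have eq: "\<phi> (\<lambda>j. (\<lambda>(i, s). \<xi> i s) j \<omega>) ((\<lambda>(i, s). \<xi> i s) (i, t) \<omega>)
      = inner (v (noise \<omega>)) (grad_noise i t \<omega>)" for \<omega>
    by (simp add: noise_eq \<phi>_def grad_noise_def X_eq_X_path)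
  have "(\<lambda>(a, c). \<phi> a c) \<in> borel_measurable (paths \<Otimes>\<^sub>M borel)"
    unfolding \<phi>_def by measurable
  then have "(\<integral>\<omega>. \<phi> (\<lambda>j. (\<lambda>(i, s). \<xi> i s) j \<omega>) ((\<lambda>(i, s). \<xi> i s) (i, t) \<omega>) \<partial>M) = 0"
  proof (rule integral_indep_coordinate_eq_0[OF \<xi>_indep])
    show "integrable M (\<lambda>\<omega>. \<phi> (\<lambda>j. (\<lambda>(i, s). \<xi> i s) j \<omega>) ((\<lambda>(i, s). \<xi> i s) (i, t) \<omega>))"
      unfolding eq by (rule sq_integrable_integrable_inner[OF sq grad_noise_sq_integrable])
    show "(\<integral>\<omega>. \<phi> a ((\<lambda>(i, s). \<xi> i s) (i, t) \<omega>) \<partial>M) = 0" for a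
      using noise_at_point_integrable noise_at_point_mean_zero by (simp add: \<phi>_def)
  qed (simp add: \<phi>_def X_path_upd v_upd)
  then show ?thesis unfolding eq .
qed

lemma sq_integrable_stochastic_gradient:
  assumes "sq_integrable M (\<lambda>\<omega>. X t \<omega> i)"
  shows "sq_integrable M (\<lambda>\<omega>. gF i (X t \<omega> i) (\<xi> i t \<omega>))"
proof -
  have "sq_integrable M (\<lambda>\<omega>. gf i (X t \<omega> i) + grad_noise i t \<omega>)"
    by (intro sq_integrable_add grad_noise_sq_integrable
        sq_integrable_Lipschitz_comp[OF smooth gf_borel_measurable assms])
  then show ?thesis by (simp add: grad_noise_def)
qed

lemma sq_integrable_iterates:
  "sq_integrable M (\<lambda>\<omega>. X t \<omega> i)" "sq_integrable M (\<lambda>\<omega>. Mm t \<omega> i)"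
proof -
  have "\<forall>i. sq_integrable M (\<lambda>\<omega>. X t \<omega> i) \<and> sq_integrable M (\<lambda>\<omega>. X (Suc t) \<omega> i)
      \<and> sq_integrable M (\<lambda>\<omega>. Mm t \<omega> i)"
  proof (induction t)
    case 0
    have X0: "sq_integrable M (\<lambda>\<omega>. X 0 \<omega> j)" for j
      by (simp add: edm_iteratesD(1)[OF iter] sq_integrable_const)
    have M0: "sq_integrable M (\<lambda>\<omega>. Mm 0 \<omega> j)" for j
      unfolding edm_iteratesD(2)[OF iter]
      by (intro sq_integrable_scaleR sq_integrable_stochastic_gradient X0)
    have "sq_integrable M (\<lambda>\<omega>. X (Suc 0) \<omega> j)" for j
      unfolding edm_iteratesD(4)[OF iter]
      by (intro sq_integrable_mix sq_integrable_add sq_integrable_diff sq_integrable_scaleR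
          X0 M0 sq_integrable_const)
    with X0 M0 show ?case by blast
  next
    case (Suc t)
    then have X0: "sq_integrable M (\<lambda>\<omega>. X t \<omega> j)" and X1: "sq_integrable M (\<lambda>\<omega>. X (Suc t) \<omega> j)"
      and M0: "sq_integrable M (\<lambda>\<omega>. Mm t \<omega> j)" for j
      by blast+
    have M1: "sq_integrable M (\<lambda>\<omega>. Mm (Suc t) \<omega> j)" for j
      unfolding edm_iteratesD(3)[OF iter]
      by (intro sq_integrable_add sq_integrable_scaleR sq_integrable_stochastic_gradient X1 M0)
    have "sq_integrable M (\<lambda>\<omega>. X (Suc (Suc t)) \<omega> j)" for j
      unfolding edm_iteratesD(5)[OF iter]
      by (intro sq_integrable_mix sq_integrable_add sq_integrable_diff sq_integrable_scaleR
          X0 X1 M0 M1)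
    with X1 M1 show ?case by blast
  qed
  then show "sq_integrable M (\<lambda>\<omega>. X t \<omega> i)" "sq_integrable M (\<lambda>\<omega>. Mm t \<omega> i)"
    by blast+
qed

lemma avg_grad_noise_orthogonal:
  assumes [measurable]: "v \<in> borel_measurable paths"
    and v_upd: "\<And>i a c. v (a((i, t) := c)) = v a"
    and sq: "sq_integrable M (\<lambda>\<omega>. v (noise \<omega>))"
  shows "(\<integral>\<omega>. inner (v (noise \<omega>)) (avg (\<lambda>i. grad_noise i t \<omega>)) \<partial>M) = 0"
proof -
  have int: "integrable M (\<lambda>\<omega>. inner (v (noise \<omega>)) (grad_noise i t \<omega>))" for i
    by (rule sq_integrable_integrable_inner[OF sq grad_noise_sq_integrable])
  have "inner (v (noise \<omega>)) (avg (\<lambda>i. grad_noise i t \<omega>))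
      = avg (\<lambda>i. inner (v (noise \<omega>)) (grad_noise i t \<omega>))" for \<omega>
    by (simp add: inner_commute[of "v (noise \<omega>)"] inner_avg_left)
  then show ?thesis
    using int grad_noise_orthogonal[OF _ v_upd sq] by (simp add: avg_def)
qed

lemma avg_grad_noise_variance:
  "(\<integral>\<omega>. (norm (avg (\<lambda>i. grad_noise i t \<omega>)))\<^sup>2 \<partial>M) \<le> \<sigma>\<^sup>2 / real CARD('n)"
proof -
  have int: "integrable M (\<lambda>\<omega>. inner (grad_noise i t \<omega>) (grad_noise j t \<omega>))" for i j
    by (intro sq_integrable_integrable_inner grad_noise_sq_integrable)
  have cross: "(\<integral>\<omega>. inner (grad_noise i t \<omega>) (grad_noise j t \<omega>) \<partial>M)
      = (if i = j then (\<integral>\<omega>. (norm (grad_noise i t \<omega>))\<^sup>2 \<partial>M) else 0)" for i j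
  proof (cases "i = j")
    case False
    define v where "v a = gF i (X_path t a i) (a (i, t)) - gf i (X_path t a i)" for a
    have "v (noise \<omega>) = grad_noise i t \<omega>" for \<omega>
      by (simp add: v_def grad_noise_def X_eq_X_path)
    moreover have "(\<integral>\<omega>. inner (v (noise \<omega>)) (grad_noise j t \<omega>) \<partial>M) = 0"
    proof (rule grad_noise_orthogonal)
      show "v \<in> borel_measurable paths" unfolding v_def by measurable
      show "v (a((j, t) := c)) = v a" for a c
        using False by (simp add: v_def X_path_upd)
      show "sq_integrable M (\<lambda>\<omega>. v (noise \<omega>))"
        by (simp add: v_def grad_noise_def[symmetric] X_eq_X_path[symmetric] grad_noise_sq_integrable)
    qed
    ultimately show ?thesis using False by simp
  qed (simp add: power2_norm_eq_inner)
  have "(\<integral>\<omega>. (norm (avg (\<lambda>i. grad_noise i t \<omega>)))\<^sup>2 \<partial>M)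
      = (1 / real CARD('n))\<^sup>2 * (\<Sum>i\<in>UNIV. \<Sum>j\<in>UNIV. \<integral>\<omega>. inner (grad_noise i t \<omega>) (grad_noise j t \<omega>) \<partial>M)"
    using int by (simp add: power2_norm_avg_eq_double_sum Bochner_Integration.integral_sum
        Bochner_Integration.integrable_sum)
  also have "\<dots> = (1 / real CARD('n))\<^sup>2 * (\<Sum>i\<in>UNIV. \<integral>\<omega>. (norm (grad_noise i t \<omega>))\<^sup>2 \<partial>M)"
    by (simp add: cross)
  also have "\<dots> \<le> (1 / real CARD('n))\<^sup>2 * (\<Sum>i\<in>(UNIV :: 'n set). \<sigma>\<^sup>2)"
    by (intro mult_left_mono sum_mono grad_noise_variance) auto
  also have "\<dots> = \<sigma>\<^sup>2 / real CARD('n)"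
    by (simp add: power2_eq_square)
  finally show ?thesis .
qed

definition mbar_path :: "nat \<Rightarrow> ('n \<times> nat \<Rightarrow> real^'p) \<Rightarrow> real^'d" where
  "mbar_path t a = (if t = 0 then 0 else avg (M_path (t - 1) a))"

lemma mbar_prev_eq_mbar_path: "mbar_prev Mm t \<omega> = mbar_path t (noise \<omega>)"
  by (simp add: mbar_prev_def mbar_path_def Mm_eq_M_path)

lemma mbar_path_upd: "mbar_path t (a((i, t) := c)) = mbar_path t a"
  by (simp add: mbar_path_def M_path_upd)

lemma mbar_path_measurable [measurable]: "mbar_path t \<in> borel_measurable paths"
  by (cases t) (simp_all add: mbar_path_def[abs_def] avg_def)

lemma zseq_eq: "zseq \<beta> X t \<omega> = avg (X t \<omega>) - (\<alpha> * \<beta> / (1 - \<beta>)) *\<^sub>R mbar_prev Mm t \<omega>"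
  using beta by (intro zseq_eq_avg_minus_mbar_prev[OF mixing iter]) simp

lemma sq_integrable_mbar_prev: "sq_integrable M (mbar_prev Mm t)"
proof (cases t)
  case (Suc s)
  have "sq_integrable M (\<lambda>\<omega>. avg (Mm s \<omega>))" by (intro sq_integrable_avg sq_integrable_iterates)
  with Suc show ?thesis by (simp add: mbar_prev_def[abs_def])
qed (simp add: mbar_prev_def[abs_def] sq_integrable_const)

lemma sq_integrable_zseq: "sq_integrable M (zseq \<beta> X t)"
proof -
  have "sq_integrable M (\<lambda>\<omega>. avg (X t \<omega>) - (\<alpha> * \<beta> / (1 - \<beta>)) *\<^sub>R mbar_prev Mm t \<omega>)"
    by (intro sq_integrable_diff sq_integrable_avg sq_integrable_iterates sq_integrable_scaleR
        sq_integrable_mbar_prev)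
  then show ?thesis
    unfolding zseq_eq[abs_def] .
qed

lemma integrable_fbar: "sq_integrable M Z \<Longrightarrow> integrable M (\<lambda>\<omega>. fbar (Z \<omega>))"
proof -
  assume Z: "sq_integrable M Z"
  obtain K where K: "\<And>v. \<bar>fbar v\<bar> \<le> K * (1 + (norm v)\<^sup>2)"
    using fbar_quadratic_bound[OF bdd_below] by blast
  have [measurable]: "Z \<in> borel_measurable M" using Z by (rule sq_integrableD)
  show ?thesis
  proof (rule Bochner_Integration.integrable_bound)
    show "integrable M (\<lambda>\<omega>. K * (1 + (norm (Z \<omega>))\<^sup>2))"
      using Z by (simp add: sq_integrable_def)
    show "AE \<omega> in M. norm (fbar (Z \<omega>)) \<le> norm (K * (1 + (norm (Z \<omega>))\<^sup>2))"
      using K by (auto intro: order_trans[OF _ abs_ge_self])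
  qed (simp add: avg_def)
qed

lemma zseq_Suc_split:
  "zseq \<beta> X (Suc t) \<omega>
    = zseq \<beta> X t \<omega> - \<alpha> *\<^sub>R (avg (\<lambda>i. gf i (X t \<omega> i)) + avg (\<lambda>i. grad_noise i t \<omega>))"
  using beta by (simp add: zseq_Suc[OF mixing iter] grad_noise_def avg_add[symmetric])

lemma expected_cross_terms_vanish:
  "(\<integral>\<omega>. inner (grad_fbar (zseq \<beta> X t \<omega>)) (avg (\<lambda>i. grad_noise i t \<omega>)) \<partial>M) = 0"
  "(\<integral>\<omega>. inner (avg (\<lambda>i. gf i (X t \<omega> i))) (avg (\<lambda>i. grad_noise i t \<omega>)) \<partial>M) = 0"
proof -
  have z: "zseq \<beta> X t \<omega> = avg (X_path t (noise \<omega>)) - (\<alpha> * \<beta> / (1 - \<beta>)) *\<^sub>R mbar_path t (noise \<omega>)"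
    for \<omega>
    by (simp add: zseq_eq X_eq_X_path mbar_prev_eq_mbar_path)
  show "(\<integral>\<omega>. inner (grad_fbar (zseq \<beta> X t \<omega>)) (avg (\<lambda>i. grad_noise i t \<omega>)) \<partial>M) = 0"
    unfolding z
  proof (rule avg_grad_noise_orthogonal)
    show "(\<lambda>a. grad_fbar (avg (X_path t a) - (\<alpha> * \<beta> / (1 - \<beta>)) *\<^sub>R mbar_path t a))
        \<in> borel_measurable paths"
      by (simp add: avg_def) measurable
    show "sq_integrable M (\<lambda>\<omega>. grad_fbar (avg (X_path t (noise \<omega>))
        - (\<alpha> * \<beta> / (1 - \<beta>)) *\<^sub>R mbar_path t (noise \<omega>)))"
      unfolding z[symmetric]
      by (rule sq_integrable_Lipschitz_comp[OF grad_fbar_Lipschitz _ sq_integrable_zseq])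
        (simp add: avg_def)
  qed (simp only: X_path_upd mbar_path_upd)
  have b: "avg (\<lambda>i. gf i (X t \<omega> i)) = avg (\<lambda>i. gf i (X_path t (noise \<omega>) i))" for \<omega>
    by (simp add: X_eq_X_path)
  show "(\<integral>\<omega>. inner (avg (\<lambda>i. gf i (X t \<omega> i))) (avg (\<lambda>i. grad_noise i t \<omega>)) \<partial>M) = 0"
    unfolding b
  proof (rule avg_grad_noise_orthogonal)
    show "(\<lambda>a. avg (\<lambda>i. gf i (X_path t a i))) \<in> borel_measurable paths"
      by (simp add: avg_def) measurable
    show "sq_integrable M (\<lambda>\<omega>. avg (\<lambda>i. gf i (X_path t (noise \<omega>) i)))"
      unfolding b[symmetric]
      by (intro sq_integrable_avg sq_integrable_Lipschitz_comp[OF smooth] sq_integrable_iterates)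
        simp
  qed (simp only: X_path_upd)
qed

lemma expected_descent:
  "(\<integral>\<omega>. fbar (zseq \<beta> X (Suc t) \<omega>) \<partial>M)
    \<le> (\<integral>\<omega>. fbar (zseq \<beta> X t \<omega>) \<partial>M)
     + \<alpha>\<^sup>2 * L * \<beta> / (2 * (1 - \<beta>)) * (\<integral>\<omega>. (norm (mbar_prev Mm t \<omega>))\<^sup>2 \<partial>M)
     + \<alpha> * L\<^sup>2 / (2 * real CARD('n))
         * (\<integral>\<omega>. (\<Sum>i\<in>UNIV. (norm (X t \<omega> i - avg (X t \<omega>)))\<^sup>2) \<partial>M)
     + \<alpha>\<^sup>2 * L * \<sigma>\<^sup>2 / (2 * real CARD('n))
     - \<alpha> / 2 * (1 - \<beta> * \<alpha> * L / (1 - \<beta>) - \<alpha> * L)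
         * (\<integral>\<omega>. (norm (avg (\<lambda>i. gf i (X t \<omega> i))))\<^sup>2 \<partial>M)
     - \<alpha> / 2 * (\<integral>\<omega>. (norm (grad_fbar (avg (X t \<omega>))))\<^sup>2 \<partial>M)"
proof -
  define z where "z = zseq \<beta> X t"
  define m where "m = mbar_prev Mm t"
  define b where "b \<omega> = avg (\<lambda>i. gf i (X t \<omega> i))" for \<omega>
  define e where "e \<omega> = avg (\<lambda>i. grad_noise i t \<omega>)" for \<omega>
  define S where "S \<omega> = (\<Sum>i\<in>UNIV. (norm (X t \<omega> i - avg (X t \<omega>)))\<^sup>2)" for \<omega>
  define c\<^sub>1 c\<^sub>2 c\<^sub>3 where "c\<^sub>1 = \<alpha>\<^sup>2 * L * \<beta> / (2 * (1 - \<beta>))" and "c\<^sub>2 = \<alpha> * L\<^sup>2 / (2 * real CARD('n))"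
    and "c\<^sub>3 = \<alpha> / 2 * (1 - \<beta> * \<alpha> * L / (1 - \<beta>) - \<alpha> * L)"
  define R where "R \<omega> = fbar (z \<omega>) + c\<^sub>1 * (norm (m \<omega>))\<^sup>2 + c\<^sub>2 * S \<omega> - c\<^sub>3 * (norm (b \<omega>))\<^sup>2
      - \<alpha> / 2 * (norm (grad_fbar (avg (X t \<omega>))))\<^sup>2
      + (- \<alpha> * inner (grad_fbar (z \<omega>)) (e \<omega>) + \<alpha>\<^sup>2 * L * inner (b \<omega>) (e \<omega>)
         + \<alpha>\<^sup>2 * L / 2 * (norm (e \<omega>))\<^sup>2)" for \<omega>
  have step: "fbar (zseq \<beta> X (Suc t) \<omega>) \<le> R \<omega>" for \<omega>
  proof -
    have z: "avg (X t \<omega>) - (\<alpha> * \<beta> / (1 - \<beta>)) *\<^sub>R m \<omega> = z \<omega>"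
      by (simp add: z_def m_def zseq_eq)
    have "zseq \<beta> X (Suc t) \<omega> = z \<omega> - \<alpha> *\<^sub>R (b \<omega> + e \<omega>)"
      by (simp add: zseq_Suc_split z_def b_def e_def)
    then show ?thesis
      using edm_step_bound[OF alpha beta, of "X t \<omega>" "m \<omega>" "e \<omega>", unfolded z]
      by (simp add: R_def b_def S_def c\<^sub>1_def c\<^sub>2_def c\<^sub>3_def)
  qed
  have sq: "sq_integrable M z" "sq_integrable M m" "sq_integrable M b" "sq_integrable M e"
    "sq_integrable M (\<lambda>\<omega>. grad_fbar (avg (X t \<omega>)))"
    "\<And>i. sq_integrable M (\<lambda>\<omega>. X t \<omega> i - avg (X t \<omega>))"
    unfolding z_def m_def b_def e_def
    by (intro sq_integrable_zseq sq_integrable_mbar_prev sq_integrable_avg sq_integrable_diff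
        sq_integrable_Lipschitz_comp[OF smooth gf_borel_measurable]
        sq_integrable_Lipschitz_comp[OF grad_fbar_Lipschitz grad_fbar_borel_measurable]
        sq_integrable_iterates grad_noise_sq_integrable)+
  have int: "integrable M (\<lambda>\<omega>. fbar (z \<omega>))" "integrable M (\<lambda>\<omega>. (norm (m \<omega>))\<^sup>2)"
    "integrable M S" "integrable M (\<lambda>\<omega>. (norm (b \<omega>))\<^sup>2)"
    "integrable M (\<lambda>\<omega>. (norm (grad_fbar (avg (X t \<omega>))))\<^sup>2)"
    "integrable M (\<lambda>\<omega>. inner (grad_fbar (z \<omega>)) (e \<omega>))" "integrable M (\<lambda>\<omega>. inner (b \<omega>) (e \<omega>))"
    "integrable M (\<lambda>\<omega>. (norm (e \<omega>))\<^sup>2)"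
    unfolding S_def[abs_def]
    by (intro integrable_fbar sq_integrableD(2) sq Bochner_Integration.integrable_sum finite_UNIV
        sq_integrable_integrable_inner
        sq_integrable_Lipschitz_comp[OF grad_fbar_Lipschitz grad_fbar_borel_measurable])+
  have cross: "(\<integral>\<omega>. inner (grad_fbar (z \<omega>)) (e \<omega>) \<partial>M) = 0" "(\<integral>\<omega>. inner (b \<omega>) (e \<omega>) \<partial>M) = 0"
    using expected_cross_terms_vanish[of t] by (simp_all add: z_def b_def e_def)
  have "(\<integral>\<omega>. fbar (zseq \<beta> X (Suc t) \<omega>) \<partial>M) \<le> (\<integral>\<omega>. R \<omega> \<partial>M)"
    using int by (intro integral_mono[OF integrable_fbar[OF sq_integrable_zseq] _ step])
      (simp add: R_def)
  also have "(\<integral>\<omega>. R \<omega> \<partial>M) = (\<integral>\<omega>. fbar (z \<omega>) \<partial>M) + c\<^sub>1 * (\<integral>\<omega>. (norm (m \<omega>))\<^sup>2 \<partial>M)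
      + c\<^sub>2 * (\<integral>\<omega>. S \<omega> \<partial>M) - c\<^sub>3 * (\<integral>\<omega>. (norm (b \<omega>))\<^sup>2 \<partial>M)
      - \<alpha> / 2 * (\<integral>\<omega>. (norm (grad_fbar (avg (X t \<omega>))))\<^sup>2 \<partial>M)
      + \<alpha>\<^sup>2 * L / 2 * (\<integral>\<omega>. (norm (e \<omega>))\<^sup>2 \<partial>M)"
    using int cross unfolding R_def by simp
  also have "\<alpha>\<^sup>2 * L / 2 * (\<integral>\<omega>. (norm (e \<omega>))\<^sup>2 \<partial>M) \<le> \<alpha>\<^sup>2 * L / 2 * (\<sigma>\<^sup>2 / real CARD('n))"
    unfolding e_def using L_nonneg avg_grad_noise_variance by (intro mult_left_mono) auto
  finally show ?thesis
    unfolding z_def m_def b_def S_def c\<^sub>1_def c\<^sub>2_def c\<^sub>3_def by simp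
qed

end

theorem lemma1:
  fixes M :: "'a measure"
    and W :: "real^'n::finite^'n"
    and D :: "'n \<Rightarrow> (real^'p::finite) measure"
    and F :: "'n \<Rightarrow> real^'d::finite \<Rightarrow> real^'p \<Rightarrow> real"
    and gF :: "'n \<Rightarrow> real^'d \<Rightarrow> real^'p \<Rightarrow> real^'d"
    and gf :: "'n \<Rightarrow> real^'d \<Rightarrow> real^'d"
    and \<xi> :: "'n \<Rightarrow> nat \<Rightarrow> 'a \<Rightarrow> real^'p"
    and X Mm :: "nat \<Rightarrow> 'a \<Rightarrow> 'n \<Rightarrow> real^'d"
    and x0 :: "real^'d"
    and \<alpha> \<beta> L \<sigma> :: real
    and t :: nat
  defines "f \<equiv> \<lambda>i x. \<integral>s. F i x s \<partial>D i"
  defines "fbar \<equiv> \<lambda>x. (1 / real CARD('n)) * (\<Sum>i\<in>UNIV. f i x)"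
  assumes A1: "mixing_matrix W"
    and grad_F: "\<And>i x s. GDERIV (\<lambda>y. F i y s) x :> gF i x s"
    and gF_meas: "\<And>i. (\<lambda>(x, s). gF i x s) \<in> borel_measurable borel"
    and grad_f: "\<And>i x. GDERIV (f i) x :> gf i x"
    and smooth: "\<And>i x y. norm (gf i x - gf i y) \<le> L * norm (x - y)"
    and bdd_below: "\<And>i. \<exists>b. \<forall>x. b \<le> f i x"
    and prob: "prob_space M"
    and D_prob: "\<And>i. prob_space (D i)"
    and D_sets: "\<And>i. sets (D i) = sets borel"
    and \<xi>_meas: "\<And>i s. \<xi> i s \<in> borel_measurable M"
    and \<xi>_distr: "\<And>i s. distr M borel (\<xi> i s) = D i"
    and \<xi>_indep: "prob_space.indep_vars M (\<lambda>_. borel) (\<lambda>(i, s). \<xi> i s) UNIV"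
    and unbiased: "\<And>s i y j. y \<in> borel_measurable (filt M \<xi> s) \<Longrightarrow>
        AE \<omega> in M. real_cond_exp M (filt M \<xi> s)
           (\<lambda>\<omega>. (gF i (y \<omega>) (\<xi> i s \<omega>) - gf i (y \<omega>)) $ j) \<omega> = 0"
    and variance: "\<And>s i y. y \<in> borel_measurable (filt M \<xi> s) \<Longrightarrow>
        AE \<omega> in M. nn_cond_exp M (filt M \<xi> s)
           (\<lambda>\<omega>. ennreal ((norm (gF i (y \<omega>) (\<xi> i s \<omega>) - gf i (y \<omega>)))\<^sup>2)) \<omega> \<le> ennreal (\<sigma>\<^sup>2)"
    and alpha: "\<alpha> > 0"
    and beta: "0 \<le> \<beta>" "\<beta> < 1"
    and iter: "edm_iterates W \<alpha> \<beta> gF \<xi> x0 X Mm"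
  shows "(\<integral>\<omega>. fbar (zseq \<beta> X (Suc t) \<omega>) \<partial>M)
    \<le> (\<integral>\<omega>. fbar (zseq \<beta> X t \<omega>) \<partial>M)
     + \<alpha>\<^sup>2 * L * \<beta> / (2 * (1 - \<beta>)) * (\<integral>\<omega>. (norm (mbar_prev Mm t \<omega>))\<^sup>2 \<partial>M)
     + \<alpha> * L\<^sup>2 / (2 * real CARD('n))
         * (\<integral>\<omega>. (\<Sum>i\<in>UNIV. (norm (X t \<omega> i - avg (X t \<omega>)))\<^sup>2) \<partial>M)
     + \<alpha>\<^sup>2 * L * \<sigma>\<^sup>2 / (2 * real CARD('n))
     - \<alpha> / 2 * (1 - \<beta> * \<alpha> * L / (1 - \<beta>) - \<alpha> * L)
         * (\<integral>\<omega>. (norm (avg (\<lambda>i. gf i (X t \<omega> i))))\<^sup>2 \<partial>M)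
     - \<alpha> / 2 * (\<integral>\<omega>. (norm (avg (\<lambda>i. gf i (avg (X t \<omega>)))))\<^sup>2 \<partial>M)"
proof -
  interpret edm M f gf L W gF \<xi> X Mm x0 \<alpha> \<beta> \<sigma>
    by (intro edm.intro[OF prob] smooth_agents.intro edm_axioms.intro) (fact assms)+
  have "fbar = (\<lambda>x. avg (\<lambda>i. f i x))"
    by (simp add: fbar_def avg_def fun_eq_iff)
  then show ?thesis
    using expected_descent[of t] by simp
qed

end
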